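(* Let $k\in\mathbb{R}$ and let $u\in USC(\bar\Omega)$ be a viscosity subsolution of $$-\Delta_\infty u-\beta|Du|\le k\text{ in }\Omega,\qquad D_\nu u\le0\text{ on }\Gamma_N.$$ Let $r>0$ and $\gamma\in C^2([0,r])$ satisfy $-\gamma''-\beta|\gamma'|=k$ and $\gamma'>0$ in $(0,r)$. For some $x_0\in\bar\Omega$ define $\varphi(x):=\gamma(|x-x_0|)$, and set $\Lambda:=(\partial B(x_0,r)\cap\bar\Omega)\cup(B(x_0,r)\cap\Gamma_D)$. Then $$\max_{\bar B(x_0,r)\cap\bar\Omega}(u-\varphi)=\max_{\Lambda\cup\{x_0\}}(u-\varphi),$$ and if in addition $\gamma'(0)=0$, then $$\max_{\bar B(x_0,r)\cap\bar\Omega}(u-\varphi)=\max_{\Lambda}(u-\varphi).$$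
   Context: Standing setting: $\Omega\subseteq\mathbb{R}^n$ is a bounded, open, connected set with $C^1$ boundary; $\nu$ is the outward unit normal. For some open $A\subseteq\mathbb{R}^n$, $\Gamma_N:=\partial\Omega\cap A$, $\Gamma_D:=\partial\Omega\setminus A\neq\emptyset$. If $\Gamma_N\ne\emptyset$, $\Omega$ is convex. $\beta\in\mathbb{R}$. For $\varphi\in C^2$: $\Delta_\infty^+\varphi(x):=|D\varphi|^{-2}\langle D^2\varphi D\varphi,D\varphi\rangle(x)$ if $D\varphi(x)\ne0$, else $\max_{|v|=1}\langle D^2\varphi(x)v,v\rangle$. Subsolution: $u$ USC on $\bar\Omega$ such that for every $\psi\in C^2(\bar\Omega)$ and $y\in\Omega\cup\Gamma_N$ where $u-\psi$ has a local maximum relative to $\bar\Omega$: $-\Delta^+_\infty\psi(y)-\beta|D\psi(y)|\le k$, or $y\in\Gamma_N$ and $D\psi(y)\cdot\nu(y)\le0$. *)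

theory Defs
  imports "HOL-Analysis.Analysis"
begin

definition usc_on :: "'a::metric_space set \<Rightarrow> ('a \<Rightarrow> real) \<Rightarrow> bool" where
  "usc_on S u \<longleftrightarrow>
     (\<forall>x\<in>S. \<forall>e>0. \<exists>d>0. \<forall>y\<in>S. dist y x < d \<longrightarrow> u y < u x + e)"

definition C2_on_with ::
  "'a::euclidean_space set \<Rightarrow> ('a \<Rightarrow> real) \<Rightarrow> ('a \<Rightarrow> 'a) \<Rightarrow> ('a \<Rightarrow> ('a \<Rightarrow>\<^sub>L 'a)) \<Rightarrow> bool" where
  "C2_on_with U \<psi> G H \<longleftrightarrow>
     open U \<and>
     (\<forall>x\<in>U. (\<psi> has_derivative (\<lambda>h. G x \<bullet> h)) (at x)) \<and>
     (\<forall>x\<in>U. (G has_derivative blinfun_apply (H x)) (at x)) \<and>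
     continuous_on U H"

definition C2_closed_with ::
  "'a::euclidean_space set \<Rightarrow> ('a \<Rightarrow> real) \<Rightarrow> ('a \<Rightarrow> 'a) \<Rightarrow> ('a \<Rightarrow> ('a \<Rightarrow>\<^sub>L 'a)) \<Rightarrow> bool" where
  "C2_closed_with K \<psi> G H \<longleftrightarrow> (\<exists>U. K \<subseteq> U \<and> C2_on_with U \<psi> G H)"

definition inf_lap_plus :: "'a::euclidean_space \<Rightarrow> ('a \<Rightarrow>\<^sub>L 'a) \<Rightarrow> real" where
  "inf_lap_plus p X =
     (if p \<noteq> 0 then (blinfun_apply X p \<bullet> p) / (norm p)\<^sup>2
      else (SUP v\<in>{v. norm v = 1}. blinfun_apply X v \<bullet> v))"

definition C1_boundary_normal :: "'a::euclidean_space set \<Rightarrow> ('a \<Rightarrow> 'a) \<Rightarrow> bool" where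
  "C1_boundary_normal \<Omega> \<nu> \<longleftrightarrow>
     (\<forall>x\<in>frontier \<Omega>. \<exists>U \<rho> G.
        open U \<and> x \<in> U \<and>
        (\<forall>y\<in>U. (\<rho> has_derivative (\<lambda>h. G y \<bullet> h)) (at y)) \<and>
        continuous_on U G \<and> (\<forall>y\<in>U. G y \<noteq> 0) \<and>
        \<Omega> \<inter> U = {y\<in>U. \<rho> y < 0} \<and>
        U - closure \<Omega> = {y\<in>U. \<rho> y > 0} \<and>
        \<nu> x = G x /\<^sub>R norm (G x))"

text \<open>Viscosity subsolution of  -Delta_inf u - beta |Du| <= k in Omega,
  D_nu u <= 0 on Gamma_N = frontier Omega \<inter> A.\<close>
definition visc_subsol ::
  "'a::euclidean_space set \<Rightarrow> 'a set \<Rightarrow> ('a \<Rightarrow> 'a) \<Rightarrow> real \<Rightarrow> real \<Rightarrow> ('a \<Rightarrow> real) \<Rightarrow> bool" where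
  "visc_subsol \<Omega> A \<nu> \<beta> k u \<longleftrightarrow>
     usc_on (closure \<Omega>) u \<and>
     (\<forall>\<psi> G H y. C2_closed_with (closure \<Omega>) \<psi> G H \<longrightarrow>
        y \<in> \<Omega> \<union> (frontier \<Omega> \<inter> A) \<longrightarrow>
        (\<exists>e>0. \<forall>x\<in>closure \<Omega> \<inter> ball y e. u x - \<psi> x \<le> u y - \<psi> y) \<longrightarrow>
        (- inf_lap_plus (G y) (H y) - \<beta> * norm (G y) \<le> k \<or>
         (y \<in> frontier \<Omega> \<inter> A \<and> G y \<bullet> \<nu> y \<le> 0)))"

end

theory Submission
  imports Defs
begin

text \<open>
  If \<open>u - \<phi>\<close> were larger somewhere in \<open>cball x0 r \<inter> closure \<Omega>\<close> than on the set \<open>S\<close> on the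
  right-hand side, this would survive small continuous perturbations \<open>\<Psi>\<close> of \<open>\<phi>\<close>, and
  \<open>u - (\<phi> + \<Psi>)\<close> would attain its maximum at a point \<open>y\<close> of \<open>\<Omega> \<union> \<Gamma>\<^sub>N\<close> with \<open>|y - x0| < r\<close>.
  The perturbation is chosen to turn \<open>\<phi>\<close> into a strict supersolution near \<open>y\<close>: raising the
  profile to \<open>\<gamma> t + \<delta> (1 - exp (- C t))\<close> with \<open>C = |\<beta>| + 1\<close> adds a fixed margin to
  \<open>-\<gamma>'' - \<beta> |\<gamma>'|\<close> and keeps the slope away from zero, and adding \<open>\<tau> |x - z|\<^sup>2 / 2\<close> with
  \<open>z \<in> \<Omega>\<close> makes the normal derivative positive at Neumann points, where \<open>\<Omega>\<close> is convex.
  Since \<open>x \<mapsto> \<gamma> |x - x0|\<close> is only controlled through its radial profile, the function tested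
  at \<open>y\<close> is the quadratic majorant given by a one-sided Taylor bound in the radial variable;
  for small \<open>\<tau>\<close> its infinity Laplacian is close to the second derivative of the profile,
  which contradicts the subsolution inequality.

  When \<open>\<gamma>' 0 = 0\<close> the centre is excluded as well, using the profile \<open>(1 - \<delta>) \<gamma>\<close>: near \<open>x0\<close>,
  where the gradient may be small, the upper infinity Laplacian is at most the largest
  eigenvalue of the Hessian, and this is close to \<open>\<gamma>'' 0 = -k\<close> because \<open>\<gamma>' t \<le> (-k + \<epsilon>) t\<close>
  for small \<open>t\<close>.
\<close>

section \<open>Upper semicontinuity and perturbed maxima\<close>

lemma usc_on_attains_max:
  fixes f :: "'a::metric_space \<Rightarrow> real"
  assumes K: "compact K" "K \<noteq> {}" and usc: "usc_on K f"
  shows "\<exists>x\<in>K. \<forall>y\<in>K. f y \<le> f x"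
proof (rule ccontr)
  assume "\<not> ?thesis"
  then obtain g where g: "\<forall>x\<in>K. g x \<in> K \<and> f (g x) > f x"
    by (metis not_le)
  have "\<forall>x\<in>K. \<exists>d>0. \<forall>y\<in>K. dist y x < d \<longrightarrow> f y < f (g x)"
  proof
    fix x assume x: "x \<in> K"
    then have "f (g x) - f x > 0" using g by simp
    with usc x obtain d where "d > 0" "\<forall>y\<in>K. dist y x < d \<longrightarrow> f y < f x + (f (g x) - f x)"
      unfolding usc_on_def by blast
    then show "\<exists>d>0. \<forall>y\<in>K. dist y x < d \<longrightarrow> f y < f (g x)" by auto
  qed
  then obtain D where D: "\<forall>x\<in>K. D x > 0 \<and> (\<forall>y\<in>K. dist y x < D x \<longrightarrow> f y < f (g x))"
    by metis
  have "K \<subseteq> (\<Union>x\<in>K. ball x (D x))" using D by force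
  then obtain T where T: "T \<subseteq> K" "finite T" "K \<subseteq> (\<Union>x\<in>T. ball x (D x))"
    using compactE_image[OF K(1), of K "\<lambda>x. ball x (D x)"] by blast
  then have "T \<noteq> {}" using K(2) by auto
  then obtain xs where xs: "xs \<in> T" "\<forall>x\<in>T. f (g x) \<le> f (g xs)"
    using ex_is_arg_min_if_finite[OF T(2), of "\<lambda>x. - f (g x)"]
    by (fastforce simp: is_arg_min_def not_less)
  have "g xs \<in> K" using g T xs by auto
  then obtain x where x: "x \<in> T" "g xs \<in> ball x (D x)" using T by auto
  then have "f (g xs) < f (g x)" using D T \<open>g xs \<in> K\<close> by (auto simp: dist_commute)
  with xs x show False by force
qed

lemma usc_on_subset: "usc_on S u \<Longrightarrow> T \<subseteq> S \<Longrightarrow> usc_on T u"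
  unfolding usc_on_def by blast

lemma usc_on_diff_continuous:
  assumes "usc_on K f" "continuous_on K g"
  shows "usc_on K (\<lambda>x. f x - g x)"
  unfolding usc_on_def
proof (intro ballI allI impI)
  fix x e assume x: "x \<in> K" and e: "(e::real) > 0"
  obtain d1 where d1: "d1 > 0" "\<forall>y\<in>K. dist y x < d1 \<longrightarrow> f y < f x + e / 2"
    using assms(1) x e unfolding usc_on_def by (meson half_gt_zero)
  obtain d2 where d2: "d2 > 0" "\<forall>y\<in>K. dist y x < d2 \<longrightarrow> dist (g y) (g x) < e / 2"
    using assms(2) x e unfolding continuous_on_iff by (meson half_gt_zero)
  have "f y - g y < f x - g x + e" if "y \<in> K" "dist y x < min d1 d2" for y
  proof -
    have "f y < f x + e / 2" "\<bar>g y - g x\<bar> < e / 2" using d1 d2 that by (auto simp: dist_real_def)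
    then show ?thesis by linarith
  qed
  then show "\<exists>d>0. \<forall>y\<in>K. dist y x < d \<longrightarrow> f y - g y < f x - g x + e"
    using d1 d2 by (metis min_less_iff_conj)
qed

lemma SUP_eq_SUP_if_perturbed_maximizers_bounded:
  fixes f :: "'a::metric_space \<Rightarrow> real"
  assumes K: "compact K" and usc: "usc_on K f" and S: "S \<subseteq> K" "S \<noteq> {}"
    and perturb: "\<And>m \<Delta>. \<forall>x\<in>S. f x \<le> m \<Longrightarrow> \<Delta> > 0 \<Longrightarrow>
       \<exists>\<Psi>. continuous_on K \<Psi> \<and> (\<forall>x\<in>K. \<bar>\<Psi> x\<bar> \<le> \<Delta>) \<and>
           (\<forall>y\<in>K. (\<forall>x\<in>K. f x - \<Psi> x \<le> f y - \<Psi> y) \<longrightarrow> f y \<le> m + 2 * \<Delta>)"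
  shows "(SUP x\<in>K. f x) = (SUP x\<in>S. f x)"
proof -
  obtain xm where xm: "xm \<in> K" "\<forall>x\<in>K. f x \<le> f xm"
    using usc_on_attains_max[OF K _ usc] S by blast
  have bdd: "bdd_above (f ` S)" using S xm by (auto intro!: bdd_aboveI[of _ "f xm"])
  define m where "m = (SUP x\<in>S. f x)"
  have m: "\<forall>x\<in>S. f x \<le> m" unfolding m_def using bdd by (auto intro: cSUP_upper)
  have "f xm \<le> m"
  proof (rule ccontr)
    assume "\<not> f xm \<le> m"
    then have \<Delta>: "(f xm - m) / 8 > 0" by simp
    obtain \<Psi> where \<Psi>: "continuous_on K \<Psi>" "\<forall>x\<in>K. \<bar>\<Psi> x\<bar> \<le> (f xm - m) / 8"
      "\<forall>y\<in>K. (\<forall>x\<in>K. f x - \<Psi> x \<le> f y - \<Psi> y) \<longrightarrow> f y \<le> m + 2 * ((f xm - m) / 8)"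
      using perturb[OF m \<Delta>] by blast
    obtain y where y: "y \<in> K" "\<forall>x\<in>K. f x - \<Psi> x \<le> f y - \<Psi> y"
      using usc_on_attains_max[OF K _ usc_on_diff_continuous[OF usc \<Psi>(1)]] xm by blast
    have "f xm - \<Psi> xm \<le> f y - \<Psi> y" "\<bar>\<Psi> xm\<bar> \<le> (f xm - m) / 8" "\<bar>\<Psi> y\<bar> \<le> (f xm - m) / 8"
      using y xm \<Psi> by auto
    moreover have "f y \<le> m + 2 * ((f xm - m) / 8)" using \<Psi>(3) y by blast
    ultimately show False using \<Delta> by (auto simp: abs_le_iff field_simps)
  qed
  moreover have "m \<le> f xm" unfolding m_def using S xm by (intro cSUP_least) auto
  moreover have "(SUP x\<in>K. f x) = f xm" using xm by (intro cSup_eq_maximum) auto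
  ultimately show ?thesis by (simp add: m_def)
qed

lemma exists_pos_if_eventually_at_right:
  "\<forall>\<^sub>F t in at_right (0::real). P t \<Longrightarrow> \<exists>t>0. P t"
  using eventually_happens'[OF trivial_limit_at_right_real] eventually_at_right_less
  by (metis (mono_tags) eventually_conj)

lemma exists_perturbation_weight:
  fixes V g \<Delta> \<mu> M \<beta> :: real
  assumes g: "0 < g" and \<Delta>: "0 < \<Delta>" and \<mu>: "0 < \<mu>"
  shows "\<exists>\<tau>>0. \<tau> * V < g / 2 \<and> \<tau> * V\<^sup>2 / 2 < \<Delta> / 2 \<and> \<tau> + \<bar>\<beta>\<bar> * (\<tau> * V) < \<mu> / 4
           \<and> \<tau> + \<bar>\<beta>\<bar> * (\<tau> * V) + M * (2 * \<tau> * V / g)\<^sup>2 < \<mu> / 2"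
proof -
  have lim: "((\<lambda>\<tau>. \<tau> * V) \<longlongrightarrow> 0) (at_right (0::real))"
    "((\<lambda>\<tau>. \<tau> * V\<^sup>2 / 2) \<longlongrightarrow> 0) (at_right (0::real))"
    "((\<lambda>\<tau>. \<tau> + \<bar>\<beta>\<bar> * (\<tau> * V)) \<longlongrightarrow> 0) (at_right (0::real))"
    "((\<lambda>\<tau>. \<tau> + \<bar>\<beta>\<bar> * (\<tau> * V) + M * (2 * \<tau> * V / g)\<^sup>2) \<longlongrightarrow> 0) (at_right (0::real))"
    using g by (auto intro!: tendsto_eq_intros)
  have "\<forall>\<^sub>F \<tau> in at_right 0. \<tau> * V < g / 2 \<and> \<tau> * V\<^sup>2 / 2 < \<Delta> / 2 \<and> \<tau> + \<bar>\<beta>\<bar> * (\<tau> * V) < \<mu> / 4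
      \<and> \<tau> + \<bar>\<beta>\<bar> * (\<tau> * V) + M * (2 * \<tau> * V / g)\<^sup>2 < \<mu> / 2"
    using g \<Delta> \<mu>
    by (intro eventually_conj order_tendstoD(2)[OF lim(1)] order_tendstoD(2)[OF lim(2)]
        order_tendstoD(2)[OF lim(3)] order_tendstoD(2)[OF lim(4)]) auto
  then show ?thesis by (rule exists_pos_if_eventually_at_right)
qed

section \<open>One-variable calculus\<close>

lemma continuous_on_if_DERIV_within:
  "\<forall>t\<in>S. (F has_real_derivative F' t) (at t within S) \<Longrightarrow> continuous_on S F"
  unfolding continuous_on_eq_continuous_within using DERIV_continuous by blast

lemma DERIV_nonneg_imp_le_within:
  fixes F F' :: "real \<Rightarrow> real"
  assumes "l \<le> a" "a \<le> b" "b \<le> h"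
    and F: "\<forall>x\<in>{l..h}. (F has_real_derivative F' x) (at x within {l..h})"
    and nonneg: "\<forall>x. a < x \<and> x < b \<longrightarrow> F' x \<ge> 0"
  shows "F a \<le> F b"
proof (rule DERIV_nonneg_imp_increasing_open[OF \<open>a \<le> b\<close>])
  fix x assume x: "a < x" "x < b"
  then have "l < x" "x < h" using assms by auto
  moreover have "x \<in> {l..h}" using \<open>l < x\<close> \<open>x < h\<close> by auto
  ultimately have "(F has_real_derivative F' x) (at x)"
    using F at_within_Icc_at[of l x h] by metis
  then show "\<exists>y. (F has_real_derivative y) (at x) \<and> 0 \<le> y" using nonneg x by blast
next
  have "continuous_on {l..h} F"
    unfolding continuous_on_eq_continuous_within using F DERIV_continuous by blast
  then show "continuous_on {a..b} F"
    by (rule continuous_on_subset) (use assms in auto)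
qed

lemma DERIV_le_imp_le_linear_within:
  fixes F F' :: "real \<Rightarrow> real"
  assumes F: "\<forall>s\<in>{0..r}. (F has_real_derivative F' s) (at s within {0..r})"
    and t: "0 \<le> t" "t \<le> r" and le: "\<forall>s. 0 < s \<and> s < t \<longrightarrow> F' s \<le> L"
  shows "F t \<le> F 0 + L * t"
proof -
  have "\<forall>s\<in>{0..r}. ((\<lambda>s. L * s - F s) has_real_derivative L - F' s) (at s within {0..r})"
    using F by (auto intro!: derivative_eq_intros)
  from DERIV_nonneg_imp_le_within[OF _ t(1) t(2) this] le
  show ?thesis by auto
qed

lemma second_order_upper_bound:
  fixes G G1 G2 :: "real \<Rightarrow> real"
  assumes d1: "\<forall>t\<in>{0..r}. (G has_real_derivative G1 t) (at t within {0..r})"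
    and d2: "\<forall>t\<in>{0..r}. (G1 has_real_derivative G2 t) (at t within {0..r})"
    and c2: "continuous_on {0..r} G2" and t0: "t0 \<in> {0..r}" and \<eta>: "\<eta> > 0"
  shows "\<exists>d>0. \<forall>s\<in>{0..r}. \<bar>s - t0\<bar> < d \<longrightarrow>
            G s \<le> G t0 + G1 t0 * (s - t0) + (G2 t0 + \<eta>) / 2 * (s - t0)\<^sup>2"
proof -
  obtain d where d: "d > 0" "\<forall>s\<in>{0..r}. dist s t0 < d \<longrightarrow> dist (G2 s) (G2 t0) < \<eta>"
    using c2 t0 \<eta> unfolding continuous_on_iff by blast
  define F1 where "F1 x = G1 t0 + (G2 t0 + \<eta>) * (x - t0) - G1 x" for x
  define F where "F x = G t0 + G1 t0 * (x - t0) + (G2 t0 + \<eta>) / 2 * (x - t0)\<^sup>2 - G x" for x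
  have dF1: "\<forall>x\<in>{0..r}. (F1 has_real_derivative (G2 t0 + \<eta> - G2 x)) (at x within {0..r})"
    using d2 unfolding F1_def by (auto intro!: derivative_eq_intros)
  have dF: "\<forall>x\<in>{0..r}. (F has_real_derivative F1 x) (at x within {0..r})"
    using d1 unfolding F_def F1_def
    by (auto intro!: derivative_eq_intros simp: field_simps power2_eq_square)
  have dmF: "\<forall>x\<in>{0..r}. ((\<lambda>x. - F x) has_real_derivative - F1 x) (at x within {0..r})"
    using dF by (auto intro!: derivative_eq_intros)
  have slack: "G2 t0 + \<eta> - G2 x \<ge> 0" if "x \<in> {0..r}" "\<bar>x - t0\<bar> < d" for x
    using d that by (auto simp: dist_real_def)
  have "F s \<ge> 0" if s: "s \<in> {0..r}" "\<bar>s - t0\<bar> < d" for s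
  proof (cases "t0 \<le> s")
    case True
    have "F1 t0 \<le> F1 x" if "t0 \<le> x" "x \<le> s" for x
      by (rule DERIV_nonneg_imp_le_within[OF _ _ _ dF1]) (use that s t0 True slack in auto)
    then have "F t0 \<le> F s"
      by (intro DERIV_nonneg_imp_le_within[OF _ _ _ dF]) (use s t0 True in \<open>auto simp: F1_def\<close>)
    then show ?thesis by (simp add: F_def)
  next
    case False
    have "F1 x \<le> F1 t0" if "s \<le> x" "x \<le> t0" for x
      by (rule DERIV_nonneg_imp_le_within[OF _ _ _ dF1]) (use that s t0 False slack in auto)
    then have "- F s \<le> - F t0"
      by (intro DERIV_nonneg_imp_le_within[OF _ _ _ dmF]) (use s t0 False in \<open>auto simp: F1_def\<close>)
    then show ?thesis by (simp add: F_def)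
  qed
  then show ?thesis using d(1) unfolding F_def by force
qed

lemma continuous_on_Icc_const_on_interior_at_left:
  fixes F :: "real \<Rightarrow> real"
  assumes "continuous_on {0..r} F" "r > 0" "\<forall>t\<in>{0<..<r}. F t = c"
  shows "F 0 = c"
proof -
  have "(F \<longlongrightarrow> F 0) (at_right 0)" by (rule continuous_on_Icc_at_rightD[OF assms(1,2)])
  moreover have "\<forall>\<^sub>F t in at_right 0. F t = c"
    using assms(2,3) unfolding eventually_at_right_field by (intro exI[of _ r]) auto
  then have "(F \<longlongrightarrow> c) (at_right 0)" by (rule tendsto_eventually)
  ultimately show ?thesis using tendsto_unique[OF trivial_limit_at_right_real] by blast
qed

lemma continuous_on_Icc_abs_bounded:
  fixes g :: "real \<Rightarrow> real"
  assumes "continuous_on {a..b} g"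
  shows "\<exists>B>0. \<forall>t\<in>{a..b}. \<bar>g t\<bar> \<le> B"
proof -
  have "bounded (g ` {a..b})"
    by (rule compact_imp_bounded[OF compact_continuous_image[OF assms compact_Icc]])
  then obtain B where "B > 0" "\<forall>x\<in>g ` {a..b}. norm x \<le> B" by (auto simp: bounded_pos)
  then show ?thesis by auto
qed

section \<open>The radial profile\<close>

lemma ode_integrating_factor:
  fixes \<gamma>1 \<gamma>2 :: "real \<Rightarrow> real"
  assumes g2: "\<forall>t\<in>{0..r}. (\<gamma>1 has_real_derivative \<gamma>2 t) (at t within {0..r})"
    and ode: "\<forall>t\<in>{0<..<r}. - \<gamma>2 t - \<beta> * \<bar>\<gamma>1 t\<bar> = k"
    and gpos: "\<forall>t\<in>{0<..<r}. \<gamma>1 t > 0"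
  shows "\<forall>t\<in>{0..r}. ((\<lambda>t. exp (\<beta> * t) * \<gamma>1 t) has_real_derivative
           exp (\<beta> * t) * (\<gamma>2 t + \<beta> * \<gamma>1 t)) (at t within {0..r})"
    and "\<forall>t\<in>{0<..<r}. \<gamma>2 t + \<beta> * \<gamma>1 t = - k"
proof -
  show "\<forall>t\<in>{0..r}. ((\<lambda>t. exp (\<beta> * t) * \<gamma>1 t) has_real_derivative
           exp (\<beta> * t) * (\<gamma>2 t + \<beta> * \<gamma>1 t)) (at t within {0..r})"
    using g2 by (auto intro!: derivative_eq_intros simp: algebra_simps)
  show "\<forall>t\<in>{0<..<r}. \<gamma>2 t + \<beta> * \<gamma>1 t = - k"
  proof
    fix t assume t: "t \<in> {0<..<r}"
    then have "\<bar>\<gamma>1 t\<bar> = \<gamma>1 t" using gpos by (simp add: less_imp_le)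
    then show "\<gamma>2 t + \<beta> * \<gamma>1 t = - k" using ode t by force
  qed
qed

lemma ode_rhs_neg:
  fixes \<gamma>1 \<gamma>2 :: "real \<Rightarrow> real"
  assumes r: "r > 0"
    and g2: "\<forall>t\<in>{0..r}. (\<gamma>1 has_real_derivative \<gamma>2 t) (at t within {0..r})"
    and ode: "\<forall>t\<in>{0<..<r}. - \<gamma>2 t - \<beta> * \<bar>\<gamma>1 t\<bar> = k"
    and gpos: "\<forall>t\<in>{0<..<r}. \<gamma>1 t > 0" and g10: "\<gamma>1 0 = 0"
  shows "k < 0"
proof (rule ccontr)
  assume "\<not> k < 0"
  define E where "E t = exp (\<beta> * t) * \<gamma>1 t" for t
  note dE = ode_integrating_factor(1)[OF g2 ode gpos, folded E_def, rule_format]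
  have "\<forall>t\<in>{0..r}. ((\<lambda>t. - E t) has_real_derivative
           - (exp (\<beta> * t) * (\<gamma>2 t + \<beta> * \<gamma>1 t))) (at t within {0..r})"
    using dE by (auto intro!: derivative_eq_intros)
  from DERIV_nonneg_imp_le_within[OF _ _ _ this, of 0 "r / 2"]
  have "E (r / 2) \<le> 0"
    using r ode_integrating_factor(2)[OF g2 ode gpos] \<open>\<not> k < 0\<close> g10 by (simp add: E_def)
  moreover have "\<gamma>1 (r / 2) > 0" using gpos r by simp
  ultimately show False by (simp add: E_def mult_le_0_iff)
qed

lemma ode_slope_linear_lower_bound:
  fixes \<gamma>1 \<gamma>2 :: "real \<Rightarrow> real"
  assumes r: "r > 0"
    and g2: "\<forall>t\<in>{0..r}. (\<gamma>1 has_real_derivative \<gamma>2 t) (at t within {0..r})"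
    and ode: "\<forall>t\<in>{0<..<r}. - \<gamma>2 t - \<beta> * \<bar>\<gamma>1 t\<bar> = k"
    and gpos: "\<forall>t\<in>{0<..<r}. \<gamma>1 t > 0" and g10: "\<gamma>1 0 = 0"
  shows "\<exists>c>0. \<forall>t\<in>{0..r}. c * t \<le> \<gamma>1 t"
proof -
  define E where "E t = exp (\<beta> * t) * \<gamma>1 t" for t
  note dE = ode_integrating_factor(1)[OF g2 ode gpos, folded E_def, rule_format]
  note E' = ode_integrating_factor(2)[OF g2 ode gpos]
  have k: "k < 0" by (rule ode_rhs_neg[OF r g2 ode gpos g10])
  define c where "c = - k * exp (- \<bar>\<beta>\<bar> * r)"
  have c0: "0 < c" using k by (simp add: c_def mult_neg_pos)
  have "\<bar>\<beta> * s\<bar> \<le> \<bar>\<beta>\<bar> * r" if "s \<in> {0..r}" for s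
    using that by (simp add: abs_mult mult_left_mono)
  then have \<beta>s: "- (\<bar>\<beta>\<bar> * r) \<le> \<beta> * s" "\<beta> * s \<le> \<bar>\<beta>\<bar> * r" if "s \<in> {0..r}" for s
    using that abs_ge_self[of "\<beta> * s"] abs_ge_minus_self[of "\<beta> * s"] by fastforce+
  have "c * exp (- \<bar>\<beta>\<bar> * r) * t \<le> \<gamma>1 t" if t: "t \<in> {0..r}" for t
  proof -
    have dH: "\<forall>s\<in>{0..r}. ((\<lambda>s. E s - c * s) has_real_derivative
           exp (\<beta> * s) * (\<gamma>2 s + \<beta> * \<gamma>1 s) - c) (at s within {0..r})"
      using dE by (auto intro!: derivative_eq_intros)
    have "c \<le> exp (\<beta> * s) * (\<gamma>2 s + \<beta> * \<gamma>1 s)" if "0 < s" "s < t" for s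
    proof -
      have s: "s \<in> {0<..<r}" using that t by auto
      then have "exp (- \<bar>\<beta>\<bar> * r) \<le> exp (\<beta> * s)" using \<beta>s(1)[of s] by simp
      then have "- k * exp (- \<bar>\<beta>\<bar> * r) \<le> - k * exp (\<beta> * s)" using k by (intro mult_left_mono) auto
      with E' s show ?thesis by (simp add: c_def mult.commute)
    qed
    then have "E 0 - c * 0 \<le> E t - c * t"
      by (intro DERIV_nonneg_imp_le_within[OF _ _ _ dH]) (use t in auto)
    then have "c * t \<le> E t" by (simp add: E_def g10)
    then have "exp (- \<beta> * t) * (c * t) \<le> exp (- \<beta> * t) * E t" by (rule mult_left_mono) simp
    also have "\<dots> = \<gamma>1 t" by (simp add: E_def mult.assoc[symmetric] exp_add[symmetric])
    finally have upper: "exp (- \<beta> * t) * (c * t) \<le> \<gamma>1 t" .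
    have "\<beta> * t \<le> \<bar>\<beta>\<bar> * r" using \<beta>s(2)[of t] t by blast
    then have "exp (- \<bar>\<beta>\<bar> * r) \<le> exp (- \<beta> * t)" by simp
    moreover have "0 \<le> c * t" using c0 t by simp
    ultimately have "exp (- \<bar>\<beta>\<bar> * r) * (c * t) \<le> exp (- \<beta> * t) * (c * t)"
      by (rule mult_right_mono)
    with upper have "exp (- \<bar>\<beta>\<bar> * r) * (c * t) \<le> \<gamma>1 t" by linarith
    then show ?thesis by (simp add: mult_ac)
  qed
  moreover have "c * exp (- \<bar>\<beta>\<bar> * r) > 0" using c0 by simp
  ultimately show ?thesis by blast
qed

lemma ode_at_zero:
  fixes \<gamma>1 \<gamma>2 :: "real \<Rightarrow> real"
  assumes r: "r > 0"
    and g2: "\<forall>t\<in>{0..r}. (\<gamma>1 has_real_derivative \<gamma>2 t) (at t within {0..r})"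
    and g2c: "continuous_on {0..r} \<gamma>2"
    and ode: "\<forall>t\<in>{0<..<r}. - \<gamma>2 t - \<beta> * \<bar>\<gamma>1 t\<bar> = k" and g10: "\<gamma>1 0 = 0"
  shows "\<gamma>2 0 = - k"
proof -
  have "continuous_on {0..r} (\<lambda>t. - \<gamma>2 t - \<beta> * \<bar>\<gamma>1 t\<bar>)"
    by (intro continuous_intros g2c continuous_on_if_DERIV_within[OF g2])
  from continuous_on_Icc_const_on_interior_at_left[OF this r ode] show ?thesis
    using g10 by simp
qed

lemma slope_linear_upper_bound_near_zero:
  fixes \<gamma>1 \<gamma>2 :: "real \<Rightarrow> real"
  assumes r: "r > 0"
    and g2: "\<forall>t\<in>{0..r}. (\<gamma>1 has_real_derivative \<gamma>2 t) (at t within {0..r})"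
    and g2c: "continuous_on {0..r} \<gamma>2" and g10: "\<gamma>1 0 = 0" and L: "\<gamma>2 0 < L"
  shows "\<exists>b>0. b \<le> r \<and> (\<forall>t\<in>{0..b}. \<gamma>1 t \<le> L * t)"
proof -
  have "\<forall>\<^sub>F s in at_right 0. \<gamma>2 s < L"
    by (rule order_tendstoD(2)[OF continuous_on_Icc_at_rightD[OF g2c r] L])
  then obtain b where b: "b > 0" "\<forall>s>0. s < b \<longrightarrow> \<gamma>2 s < L"
    by (auto simp: eventually_at_right_field)
  have "\<gamma>1 t \<le> L * t" if "t \<in> {0..min b r}" for t
  proof -
    have "\<gamma>1 t \<le> \<gamma>1 0 + L * t"
      by (rule DERIV_le_imp_le_linear_within[OF g2]) (use that b in \<open>auto intro: less_imp_le\<close>)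
    then show ?thesis using g10 by simp
  qed
  then show ?thesis using b r by (intro exI[of _ "min b r"]) auto
qed

lemma raised_profile:
  fixes \<gamma> \<gamma>1 \<gamma>2 \<Gamma> \<Gamma>1 \<Gamma>2 :: "real \<Rightarrow> real"
  assumes g1: "\<forall>t\<in>{0..r}. (\<gamma> has_real_derivative \<gamma>1 t) (at t within {0..r})"
    and g2: "\<forall>t\<in>{0..r}. (\<gamma>1 has_real_derivative \<gamma>2 t) (at t within {0..r})"
    and g2c: "continuous_on {0..r} \<gamma>2"
    and ode: "\<forall>t\<in>{0<..<r}. - \<gamma>2 t - \<beta> * \<bar>\<gamma>1 t\<bar> = k"
    and gpos: "\<forall>t\<in>{0<..<r}. \<gamma>1 t > 0" and \<delta>: "\<delta> > 0"
    and C: "C = \<bar>\<beta>\<bar> + 1"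
    and \<Gamma>: "\<And>t. \<Gamma> t = \<gamma> t + \<delta> * (1 - exp (- C * t))"
    and \<Gamma>1: "\<And>t. \<Gamma>1 t = \<gamma>1 t + \<delta> * C * exp (- C * t)"
    and \<Gamma>2: "\<And>t. \<Gamma>2 t = \<gamma>2 t - \<delta> * C\<^sup>2 * exp (- C * t)"
  shows "\<forall>t\<in>{0..r}. (\<Gamma> has_real_derivative \<Gamma>1 t) (at t within {0..r})"
    "\<forall>t\<in>{0..r}. (\<Gamma>1 has_real_derivative \<Gamma>2 t) (at t within {0..r})"
    "continuous_on {0..r} \<Gamma>2"
    "\<forall>t\<in>{0<..<r}. \<delta> * C * exp (- C * r) \<le> \<Gamma>1 t"
    "\<forall>t\<in>{0<..<r}. k + \<delta> * C * exp (- C * r) \<le> - \<Gamma>2 t - \<beta> * \<Gamma>1 t"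
    "\<forall>t\<in>{0..r}. \<Gamma>1 t \<le> \<gamma>1 t + \<delta> * C"
    "\<forall>t\<in>{0..r}. \<bar>\<Gamma>2 t\<bar> \<le> \<bar>\<gamma>2 t\<bar> + \<delta> * C\<^sup>2"
proof -
  have C1: "C \<ge> 1" "C - \<beta> \<ge> 1" using C by auto
  have fun_eqs: "\<Gamma> = (\<lambda>t. \<gamma> t + \<delta> * (1 - exp (- C * t)))"
    "\<Gamma>1 = (\<lambda>t. \<gamma>1 t + \<delta> * C * exp (- C * t))"
    "\<Gamma>2 = (\<lambda>t. \<gamma>2 t - \<delta> * C\<^sup>2 * exp (- C * t))"
    using \<Gamma> \<Gamma>1 \<Gamma>2 by auto
  show "\<forall>t\<in>{0..r}. (\<Gamma> has_real_derivative \<Gamma>1 t) (at t within {0..r})"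
    using g1 unfolding fun_eqs by (auto intro!: derivative_eq_intros simp: algebra_simps)
  show "\<forall>t\<in>{0..r}. (\<Gamma>1 has_real_derivative \<Gamma>2 t) (at t within {0..r})"
    using g2 unfolding fun_eqs
    by (auto intro!: derivative_eq_intros simp: algebra_simps power2_eq_square)
  show "continuous_on {0..r} \<Gamma>2" unfolding fun_eqs by (intro continuous_intros g2c)
  have exp_r: "exp (- C * r) \<le> exp (- C * t)" if "t \<le> r" for t
    using that C1 by simp
  show "\<forall>t\<in>{0<..<r}. \<delta> * C * exp (- C * r) \<le> \<Gamma>1 t"
  proof
    fix t assume t: "t \<in> {0<..<r}"
    then have "\<delta> * C * exp (- C * r) \<le> \<delta> * C * exp (- C * t)"
      using exp_r[of t] \<delta> C1 by (intro mult_left_mono) auto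
    then show "\<delta> * C * exp (- C * r) \<le> \<Gamma>1 t" using gpos t by (simp add: \<Gamma>1 less_imp_le add_increasing)
  qed
  show "\<forall>t\<in>{0<..<r}. k + \<delta> * C * exp (- C * r) \<le> - \<Gamma>2 t - \<beta> * \<Gamma>1 t"
  proof
    fix t assume t: "t \<in> {0<..<r}"
    have ode_t: "- \<gamma>2 t - \<beta> * \<gamma>1 t = k" using ode gpos t by force
    have "exp (- C * t) \<le> exp (- C * t) * (C - \<beta>)"
      using mult_left_mono[OF C1(2) exp_ge_zero[of "- C * t"]] by simp
    moreover have "exp (- C * r) \<le> exp (- C * t)" using t by (intro exp_r) simp
    ultimately have "exp (- C * r) \<le> exp (- C * t) * (C - \<beta>)" by linarith
    then have "\<delta> * C * exp (- C * r) \<le> \<delta> * C * exp (- C * t) * (C - \<beta>)"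
      using mult_left_mono[of _ _ "\<delta> * C"] \<delta> C1 by (simp add: mult.assoc)
    moreover have "- \<Gamma>2 t - \<beta> * \<Gamma>1 t = (- \<gamma>2 t - \<beta> * \<gamma>1 t) + \<delta> * C * exp (- C * t) * (C - \<beta>)"
      by (simp add: \<Gamma>1 \<Gamma>2 power2_eq_square algebra_simps)
    ultimately show "k + \<delta> * C * exp (- C * r) \<le> - \<Gamma>2 t - \<beta> * \<Gamma>1 t" using ode_t by linarith
  qed
  have exp1: "exp (- C * t) \<le> 1" if "t \<in> {0..r}" for t using that C1 by simp
  show "\<forall>t\<in>{0..r}. \<Gamma>1 t \<le> \<gamma>1 t + \<delta> * C"
    using exp1 \<delta> C1 by (simp add: \<Gamma>1 mult_left_le)
  show "\<forall>t\<in>{0..r}. \<bar>\<Gamma>2 t\<bar> \<le> \<bar>\<gamma>2 t\<bar> + \<delta> * C\<^sup>2"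
  proof
    fix t assume "t \<in> {0..r}"
    then have "\<delta> * C\<^sup>2 * exp (- C * t) \<le> \<delta> * C\<^sup>2" using exp1 \<delta> by (simp add: mult_left_le)
    moreover have "\<bar>\<delta> * C\<^sup>2 * exp (- C * t)\<bar> = \<delta> * C\<^sup>2 * exp (- C * t)" using \<delta> by simp
    ultimately show "\<bar>\<Gamma>2 t\<bar> \<le> \<bar>\<gamma>2 t\<bar> + \<delta> * C\<^sup>2"
      using abs_triangle_ineq4[of "\<gamma>2 t" "\<delta> * C\<^sup>2 * exp (- C * t)"] unfolding \<Gamma>2 by linarith
  qed
qed

section \<open>Quadratic majorants of radial functions\<close>

lemma radial_excess_bounds:
  fixes t0 w q D \<eta> :: real
  assumes t0: "t0 > 0" and \<eta>: "0 < \<eta>" "\<eta> \<le> 1"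
    and wD: "\<bar>w\<bar> \<le> D" and w\<eta>: "2 * D \<le> \<eta> * t0"
    and q: "q \<ge> 0" "q * (2 * (t0 + w) + q) = D\<^sup>2 - w\<^sup>2"
  shows "q \<le> (1 + \<eta>) * (D\<^sup>2 - w\<^sup>2) / (2 * t0)" "q \<le> D\<^sup>2 / t0" "q \<le> D"
proof -
  have D0: "D \<ge> 0" using wD by auto
  have P: "0 \<le> D\<^sup>2 - w\<^sup>2" "D\<^sup>2 - w\<^sup>2 \<le> D\<^sup>2" using wD D0 abs_le_square_iff[of w D] by auto
  have "q * (2 * (t0 + w) + q) = 2 * q * (t0 + w) + q * q" by (simp add: algebra_simps)
  then have "2 * q * (t0 + w) \<le> D\<^sup>2 - w\<^sup>2" using q(2) zero_le_square[of q] by linarith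
  moreover have "t0 \<le> (1 + \<eta>) * (t0 + w)"
  proof -
    have "(1 + \<eta>) * \<bar>w\<bar> \<le> 2 * D" using \<eta> wD D0 mult_mono[of "1 + \<eta>" 2 "\<bar>w\<bar>" D] by simp
    then have "(1 + \<eta>) * w \<ge> - \<eta> * t0" using w\<eta> \<eta> abs_mult[of "1 + \<eta>" w] by (simp add: abs_le_iff)
    then show ?thesis by (simp add: algebra_simps)
  qed
  ultimately have q2: "q * (2 * t0) \<le> (1 + \<eta>) * (D\<^sup>2 - w\<^sup>2)"
    using q(1) \<eta> mult_left_mono[of t0 "(1 + \<eta>) * (t0 + w)" "2 * q"]
      mult_left_mono[of "2 * q * (t0 + w)" "D\<^sup>2 - w\<^sup>2" "1 + \<eta>"]
    by (simp add: algebra_simps)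
  then show "q \<le> (1 + \<eta>) * (D\<^sup>2 - w\<^sup>2) / (2 * t0)" using t0 by (simp add: field_simps)
  have "(1 + \<eta>) * (D\<^sup>2 - w\<^sup>2) \<le> 2 * D\<^sup>2"
    using \<eta> P mult_mono[of "1 + \<eta>" 2 "D\<^sup>2 - w\<^sup>2" "D\<^sup>2"] by simp
  then show qb2: "q \<le> D\<^sup>2 / t0" using q2 t0 by (simp add: field_simps)
  have "D \<le> t0" using w\<eta> \<eta> t0 D0 mult_right_mono[of \<eta> 1 t0] by linarith
  then have "D\<^sup>2 / t0 \<le> D"
    using D0 t0 mult_left_mono[of D t0 D] by (simp add: power2_eq_square field_simps)
  then show "q \<le> D" using qb2 by linarith
qed

text \<open>Here \<open>s = t0 + w + q\<close> is the distance to the centre, \<open>w\<close> the radial and \<open>D\<close> the full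
  displacement: the one-dimensional Taylor bound in \<open>s\<close> becomes a quadratic bound in \<open>w\<close> and \<open>D\<close>.\<close>
lemma radial_taylor_rearrangement:
  fixes t0 w q D G1 G2 \<eta> Gs Gt :: real
  assumes t0: "t0 > 0" and \<eta>: "0 < \<eta>" "\<eta> \<le> 1" and g1: "G1 \<ge> 0"
    and wD: "\<bar>w\<bar> \<le> D" and w\<eta>: "2 * D \<le> \<eta> * t0"
    and D3: "3 * D * (\<bar>G2\<bar> + 1) \<le> \<eta> * t0"
    and q: "q \<ge> 0" "q * (2 * (t0 + w) + q) = D\<^sup>2 - w\<^sup>2"
    and tay: "Gs \<le> Gt + G1 * (w + q) + (G2 + \<eta>) / 2 * (w + q)\<^sup>2"
  shows "Gs \<le> Gt + G1 * w + ((G1 * (1 + \<eta>) / t0 + \<eta>) * D\<^sup>2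
            + (G2 + 2 * \<eta> - (G1 * (1 + \<eta>) / t0 + \<eta>)) * w\<^sup>2) / 2"
proof -
  note qb = radial_excess_bounds[OF t0 \<eta> wD w\<eta> q]
  have D0: "D \<ge> 0" using wD by auto
  have cross: "\<bar>q * (2 * w + q)\<bar> \<le> D\<^sup>2 / t0 * (3 * D)"
  proof -
    have "\<bar>q * (2 * w + q)\<bar> = q * \<bar>2 * w + q\<bar>" using q(1) by (simp add: abs_mult)
    also have "\<dots> \<le> D\<^sup>2 / t0 * (3 * D)" using qb q(1) wD by (intro mult_mono) auto
    finally show ?thesis .
  qed
  have "\<bar>G2 + \<eta>\<bar> * (3 * D) \<le> (\<bar>G2\<bar> + 1) * (3 * D)"
    using \<eta> D0 by (intro mult_right_mono) auto
  then have small: "\<bar>G2 + \<eta>\<bar> * (D\<^sup>2 / t0 * (3 * D)) \<le> \<eta> * D\<^sup>2"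
    using D3 t0 mult_left_mono[of "\<bar>G2 + \<eta>\<bar> * (3 * D)" "\<eta> * t0" "D\<^sup>2 / t0"]
    by (simp add: field_simps)
  have "(G2 + \<eta>) * (q * (2 * w + q)) \<le> \<bar>G2 + \<eta>\<bar> * \<bar>q * (2 * w + q)\<bar>"
    by (metis abs_ge_self abs_mult)
  also have "\<dots> \<le> \<eta> * D\<^sup>2"
    using mult_left_mono[OF cross, of "\<bar>G2 + \<eta>\<bar>"] small by simp
  finally have sq: "(G2 + \<eta>) / 2 * (w + q)\<^sup>2 \<le> (G2 + \<eta>) / 2 * w\<^sup>2 + \<eta> / 2 * D\<^sup>2"
    by (simp add: power2_eq_square field_simps)
  have lin: "G1 * (w + q) \<le> G1 * w + G1 * ((1 + \<eta>) * (D\<^sup>2 - w\<^sup>2) / (2 * t0))"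
    using mult_left_mono[OF qb(1) g1] by (simp add: algebra_simps)
  have "Gs \<le> Gt + G1 * w + G1 * ((1 + \<eta>) * (D\<^sup>2 - w\<^sup>2) / (2 * t0))
      + (G2 + \<eta>) / 2 * w\<^sup>2 + \<eta> / 2 * D\<^sup>2"
    using tay lin sq by linarith
  also have "\<dots> = Gt + G1 * w + ((G1 * (1 + \<eta>) / t0 + \<eta>) * D\<^sup>2
            + (G2 + 2 * \<eta> - (G1 * (1 + \<eta>) / t0 + \<eta>)) * w\<^sup>2) / 2"
    using t0 by (simp add: field_simps)
  finally show ?thesis .
qed

lemma radial_distance_decomposition:
  fixes x x0 y :: "'a::real_inner"
  assumes y: "y \<noteq> x0"
  defines "t0 \<equiv> norm (y - x0)" and "e \<equiv> (y - x0) /\<^sub>R norm (y - x0)"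
  defines "q \<equiv> norm (x - x0) - t0 - e \<bullet> (x - y)"
  shows "\<bar>e \<bullet> (x - y)\<bar> \<le> norm (x - y)" "q \<ge> 0"
    "q * (2 * (t0 + e \<bullet> (x - y)) + q) = (norm (x - y))\<^sup>2 - (e \<bullet> (x - y))\<^sup>2"
    "\<bar>norm (x - x0) - t0\<bar> \<le> norm (x - y)"
proof -
  have e1: "norm e = 1" using y by (simp add: e_def)
  have xx: "x - x0 = t0 *\<^sub>R e + (x - y)" using y by (simp add: e_def t0_def algebra_simps)
  show "\<bar>e \<bullet> (x - y)\<bar> \<le> norm (x - y)" using Cauchy_Schwarz_ineq2[of e "x - y"] e1 by simp
  have ex: "e \<bullet> (x - x0) = t0 + e \<bullet> (x - y)"
    unfolding xx using e1 by (simp add: inner_add_right dot_square_norm)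
  show "q \<ge> 0" using norm_cauchy_schwarz[of e "x - x0"] e1 by (simp add: q_def ex)
  have "(norm (x - x0))\<^sup>2 = (t0 *\<^sub>R e + (x - y)) \<bullet> (t0 *\<^sub>R e + (x - y))"
    unfolding xx by (simp add: power2_norm_eq_inner)
  also have "\<dots> = t0\<^sup>2 * (e \<bullet> e) + 2 * t0 * (e \<bullet> (x - y)) + (x - y) \<bullet> (x - y)"
    by (simp add: inner_add_left inner_add_right inner_commute power2_eq_square algebra_simps)
  also have "\<dots> = t0\<^sup>2 + 2 * t0 * (e \<bullet> (x - y)) + (norm (x - y))\<^sup>2"
    using e1 by (simp add: power2_norm_eq_inner[symmetric])
  finally show "q * (2 * (t0 + e \<bullet> (x - y)) + q) = (norm (x - y))\<^sup>2 - (e \<bullet> (x - y))\<^sup>2"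
    unfolding q_def by (simp add: power2_eq_square algebra_simps)
  show "\<bar>norm (x - x0) - t0\<bar> \<le> norm (x - y)"
    unfolding t0_def using norm_triangle_ineq3[of "x - x0" "y - x0"] by simp
qed

lemma radial_quadratic_upper_bound:
  fixes G G1 G2 :: "real \<Rightarrow> real" and x0 y :: "'a::euclidean_space"
  assumes d1: "\<forall>t\<in>{0..r}. (G has_real_derivative G1 t) (at t within {0..r})"
    and d2: "\<forall>t\<in>{0..r}. (G1 has_real_derivative G2 t) (at t within {0..r})"
    and c2: "continuous_on {0..r} G2"
    and y: "0 < norm (y - x0)" "norm (y - x0) < r"
    and g1: "G1 (norm (y - x0)) \<ge> 0" and \<eta>: "0 < \<eta>" "\<eta> \<le> 1"
  defines "t0 \<equiv> norm (y - x0)" and "e \<equiv> (y - x0) /\<^sub>R norm (y - x0)"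
  shows "\<exists>\<epsilon>>0. \<forall>x. norm (x - y) < \<epsilon> \<longrightarrow> G (norm (x - x0)) \<le> G t0 + G1 t0 * (e \<bullet> (x - y))
           + ((G1 t0 * (1 + \<eta>) / t0 + \<eta>) * (norm (x - y))\<^sup>2
              + (G2 t0 + 2 * \<eta> - (G1 t0 * (1 + \<eta>) / t0 + \<eta>)) * (e \<bullet> (x - y))\<^sup>2) / 2"
proof -
  have t0: "t0 > 0" "t0 < r" using y by (auto simp: t0_def)
  obtain dT where dT: "dT > 0" "\<forall>s\<in>{0..r}. \<bar>s - t0\<bar> < dT \<longrightarrow>
            G s \<le> G t0 + G1 t0 * (s - t0) + (G2 t0 + \<eta>) / 2 * (s - t0)\<^sup>2"
    using second_order_upper_bound[OF d1 d2 c2, of t0 \<eta>] t0 \<eta> by auto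
  define \<epsilon> where "\<epsilon> = min (min dT (r - t0)) (\<eta> * t0 / (3 * (\<bar>G2 t0\<bar> + 1)))"
  have "G (norm (x - x0)) \<le> G t0 + G1 t0 * (e \<bullet> (x - y))
           + ((G1 t0 * (1 + \<eta>) / t0 + \<eta>) * (norm (x - y))\<^sup>2
              + (G2 t0 + 2 * \<eta> - (G1 t0 * (1 + \<eta>) / t0 + \<eta>)) * (e \<bullet> (x - y))\<^sup>2) / 2"
    if x: "norm (x - y) < \<epsilon>" for x
  proof -
    have "y \<noteq> x0" using y by auto
    note dec = radial_distance_decomposition[of y x0 x, OF this, folded t0_def e_def]
    have D3: "3 * norm (x - y) * (\<bar>G2 t0\<bar> + 1) \<le> \<eta> * t0"
      using x by (simp add: \<epsilon>_def field_simps)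
    then have "2 * norm (x - y) \<le> \<eta> * t0"
      using mult_left_mono[of 1 "\<bar>G2 t0\<bar> + 1" "3 * norm (x - y)"] norm_ge_zero[of "x - y"]
      by linarith
    moreover have "norm (x - x0) \<in> {0..r}" "\<bar>norm (x - x0) - t0\<bar> < dT"
      using dec(4) x t0 by (auto simp: \<epsilon>_def)
    ultimately show ?thesis
      using radial_taylor_rearrangement[OF t0(1) \<eta> g1[folded t0_def] dec(1) _ D3 dec(2,3)] dT y
      by (simp add: t0_def)
  qed
  moreover have "\<epsilon> > 0" using dT t0 \<eta> by (auto simp: \<epsilon>_def)
  ultimately show ?thesis by blast
qed

section \<open>Testing the subsolution\<close>

text \<open>The Hessian \<open>a I + b e e\<^sup>T\<close> of \<open>x \<mapsto> (a |x|\<^sup>2 + b (e \<bullet> x)\<^sup>2) / 2\<close>.\<close>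
definition quad_hessian :: "real \<Rightarrow> real \<Rightarrow> 'a::euclidean_space \<Rightarrow> ('a \<Rightarrow>\<^sub>L 'a)" where
  "quad_hessian a b e = Blinfun (\<lambda>v. a *\<^sub>R v + (b * (e \<bullet> v)) *\<^sub>R e)"

lemma quad_hessian_apply: "blinfun_apply (quad_hessian a b e) v = a *\<^sub>R v + (b * (e \<bullet> v)) *\<^sub>R e"
proof -
  have "bounded_linear (\<lambda>v::'a. a *\<^sub>R v + (b * (e \<bullet> v)) *\<^sub>R e)" by (auto intro!: bounded_linear_intros)
  then show ?thesis by (simp add: quad_hessian_def bounded_linear_Blinfun_apply)
qed

lemma visc_subsol_quadratic_test:
  fixes \<Omega> A :: "'a::euclidean_space set" and \<Phi> :: "'a \<Rightarrow> real"
  assumes sub: "visc_subsol \<Omega> A \<nu> \<beta> k u"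
    and y: "y \<in> \<Omega> \<union> (frontier \<Omega> \<inter> A)"
    and lm: "\<exists>e>0. \<forall>x\<in>closure \<Omega> \<inter> ball y e. u x - \<Phi> x \<le> u y - \<Phi> y"
    and ub: "\<exists>\<epsilon>>0. \<forall>x. norm (x - y) < \<epsilon> \<longrightarrow>
              \<Phi> x \<le> \<Phi> y + p \<bullet> (x - y) + (a * (norm (x - y))\<^sup>2 + b * (e \<bullet> (x - y))\<^sup>2) / 2"
  shows "- inf_lap_plus p (quad_hessian a b e) - \<beta> * norm p \<le> k \<or> (y \<in> frontier \<Omega> \<inter> A \<and> p \<bullet> \<nu> y \<le> 0)"
proof -
  define \<psi> where "\<psi> x = \<Phi> y + p \<bullet> (x - y) + (a * ((x - y) \<bullet> (x - y)) + b * (e \<bullet> (x - y))\<^sup>2) / 2" for x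
  define G where "G x = p + a *\<^sub>R (x - y) + (b * (e \<bullet> (x - y))) *\<^sub>R e" for x
  define H where "H x = quad_hessian a b e" for x :: 'a
  have dpsi: "(\<psi> has_derivative (\<lambda>h. G x \<bullet> h)) (at x)" for x
    unfolding \<psi>_def G_def
    apply (auto intro!: derivative_eq_intros simp: fun_eq_iff inner_add_left inner_commute algebra_simps power2_eq_square)
    apply (simp add: field_simps)
    done
  have dG: "(G has_derivative blinfun_apply (H x)) (at x)" for x
    unfolding G_def H_def quad_hessian_apply[abs_def]
    by (auto intro!: derivative_eq_intros simp: fun_eq_iff algebra_simps)
  have C2: "C2_closed_with (closure \<Omega>) \<psi> G H"
    unfolding C2_closed_with_def C2_on_with_def
    by (rule exI[of _ UNIV]) (auto simp: dpsi dG[unfolded H_def] H_def)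
  obtain e1 where e1: "e1 > 0" "\<forall>x\<in>closure \<Omega> \<inter> ball y e1. u x - \<Phi> x \<le> u y - \<Phi> y" using lm by blast
  obtain \<epsilon> where \<epsilon>: "\<epsilon> > 0" "\<forall>x. norm (x - y) < \<epsilon> \<longrightarrow>
              \<Phi> x \<le> \<Phi> y + p \<bullet> (x - y) + (a * (norm (x - y))\<^sup>2 + b * (e \<bullet> (x - y))\<^sup>2) / 2"
    using ub by blast
  have "\<exists>e>0. \<forall>x\<in>closure \<Omega> \<inter> ball y e. u x - \<psi> x \<le> u y - \<psi> y"
  proof (intro exI[of _ "min e1 \<epsilon>"] conjI ballI)
    show "min e1 \<epsilon> > 0" using e1 \<epsilon> by simp
    fix x assume x: "x \<in> closure \<Omega> \<inter> ball y (min e1 \<epsilon>)"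
    then have "norm (x - y) < \<epsilon>" by (simp add: dist_norm norm_minus_commute)
    then have "\<Phi> x \<le> \<psi> x" using \<epsilon> by (simp add: \<psi>_def power2_norm_eq_inner)
    moreover have "u x - \<Phi> x \<le> u y - \<Phi> y" using e1 x by auto
    moreover have "\<psi> y = \<Phi> y" by (simp add: \<psi>_def)
    ultimately show "u x - \<psi> x \<le> u y - \<psi> y" by linarith
  qed
  then have "- inf_lap_plus (G y) (H y) - \<beta> * norm (G y) \<le> k \<or> (y \<in> frontier \<Omega> \<inter> A \<and> G y \<bullet> \<nu> y \<le> 0)"
    using sub C2 y unfolding visc_subsol_def by blast
  then show ?thesis by (simp add: G_def H_def)
qed

lemma inf_lap_plus_quad_hessian:
  assumes "p \<noteq> 0"
  shows "inf_lap_plus p (quad_hessian a b e) = a + b * (e \<bullet> p)\<^sup>2 / (norm p)\<^sup>2"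
proof -
  have "blinfun_apply (quad_hessian a b e) p \<bullet> p = a * (p \<bullet> p) + b * (e \<bullet> p) * (e \<bullet> p)"
    by (simp add: quad_hessian_apply inner_add_left inner_commute[of e p])
  also have "\<dots> = a * (norm p)\<^sup>2 + b * (e \<bullet> p)\<^sup>2"
    by (simp add: dot_square_norm power2_eq_square)
  finally have "blinfun_apply (quad_hessian a b e) p \<bullet> p = a * (norm p)\<^sup>2 + b * (e \<bullet> p)\<^sup>2" .
  then show ?thesis using assms by (simp add: inf_lap_plus_def field_simps)
qed

lemma inf_lap_plus_quad_hessian_le:
  assumes e: "norm e = 1"
  shows "inf_lap_plus p (quad_hessian a b e) \<le> max a (a + b)"
proof (cases "p = 0")
  case False
  have c: "(e \<bullet> p)\<^sup>2 / (norm p)\<^sup>2 \<in> {0..1}"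
  proof -
    have "\<bar>e \<bullet> p\<bar> \<le> norm p" using Cauchy_Schwarz_ineq2[of e p] e by simp
    then have "(e \<bullet> p)\<^sup>2 \<le> (norm p)\<^sup>2" using abs_le_square_iff[of "e \<bullet> p" "norm p"] by simp
    then show ?thesis using False by auto
  qed
  have "a + b * c \<le> max a (a + b)" if "c \<in> {0..1}" for c
  proof (cases "b \<ge> 0")
    case True then show ?thesis using that mult_left_le[of c b] by auto
  next
    case False then show ?thesis using that by (simp add: mult_nonneg_nonpos2 le_max_iff_disj)
  qed
  from this[OF c] show ?thesis using inf_lap_plus_quad_hessian[OF False] by simp
next
  case True
  have "blinfun_apply (quad_hessian a b e) v \<bullet> v \<le> max a (a + b)" if "norm v = 1" for v
  proof -
    have "\<bar>e \<bullet> v\<bar> \<le> 1" using Cauchy_Schwarz_ineq2[of e v] e that by simp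
    then have c: "(e \<bullet> v)\<^sup>2 \<in> {0..1}" by (simp add: abs_le_square_iff abs_square_le_1)
    have "blinfun_apply (quad_hessian a b e) v \<bullet> v = a * (v \<bullet> v) + b * (e \<bullet> v) * (e \<bullet> v)"
      by (simp add: quad_hessian_apply inner_add_left inner_commute[of e v])
    also have "\<dots> = a + b * (e \<bullet> v)\<^sup>2"
      using that by (simp add: dot_square_norm power2_eq_square)
    finally have "blinfun_apply (quad_hessian a b e) v \<bullet> v = a + b * (e \<bullet> v)\<^sup>2" .
    also have "\<dots> \<le> max a (a + b)"
    proof (cases "b \<ge> 0")
      case True then show ?thesis using c mult_left_le[of "(e \<bullet> v)\<^sup>2" b] by auto
    next
      case False then show ?thesis using c by (simp add: mult_nonneg_nonpos2 le_max_iff_disj)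
    qed
    finally show ?thesis .
  qed
  then have "(SUP v\<in>{v. norm v = 1}. blinfun_apply (quad_hessian a b e) v \<bullet> v) \<le> max a (a + b)"
    using e by (intro cSUP_least) auto
  then show ?thesis using True by (simp add: inf_lap_plus_def)
qed

lemma convex_C1_boundary_inner_normal_le:
  fixes \<Omega> :: "'a::euclidean_space set"
  assumes bdry: "C1_boundary_normal \<Omega> \<nu>" and cvx: "convex \<Omega>" and op: "open \<Omega>"
    and y: "y \<in> frontier \<Omega>" and x: "x \<in> \<Omega>"
  shows "(x - y) \<bullet> \<nu> y \<le> 0"
proof (rule ccontr)
  assume "\<not> (x - y) \<bullet> \<nu> y \<le> 0"
  obtain U \<rho> G where U: "open U" "y \<in> U"
    and d\<rho>: "\<forall>z\<in>U. (\<rho> has_derivative (\<lambda>h. G z \<bullet> h)) (at z)"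
    and G0: "\<forall>z\<in>U. G z \<noteq> 0"
    and in\<Omega>: "\<Omega> \<inter> U = {z\<in>U. \<rho> z < 0}"
    and out\<Omega>: "U - closure \<Omega> = {z\<in>U. \<rho> z > 0}"
    and \<nu>: "\<nu> y = G y /\<^sub>R norm (G y)"
    using bspec[OF bdry[unfolded C1_boundary_normal_def] y] by blast
  have yc: "y \<in> closure \<Omega>" "y \<notin> \<Omega>" using y op by (auto simp: frontier_def interior_open)
  then have "\<not> \<rho> y < 0" "\<not> \<rho> y > 0" using in\<Omega> out\<Omega> U by blast+
  then have \<rho>y: "\<rho> y = 0" by linarith
  have "inverse (norm (G y)) * (G y \<bullet> (x - y)) > 0"
    using \<open>\<not> _ \<le> 0\<close> by (simp add: \<nu> inner_commute)
  moreover have "inverse (norm (G y)) > 0" using G0 U by simp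
  ultimately have pos: "G y \<bullet> (x - y) > 0" by (simp add: zero_less_mult_iff)
  define f where "f s = \<rho> (y + s *\<^sub>R (x - y))" for s :: real
  have "((\<lambda>s::real. y + s *\<^sub>R (x - y)) has_derivative (\<lambda>s. s *\<^sub>R (x - y))) (at 0)"
    by (auto intro!: derivative_eq_intros)
  moreover have "(\<rho> has_derivative (\<lambda>h. G y \<bullet> h)) (at (y + (0::real) *\<^sub>R (x - y)))"
    using d\<rho> U by simp
  ultimately have "(f has_derivative (\<lambda>s. G y \<bullet> (s *\<^sub>R (x - y)))) (at 0)"
    unfolding f_def by (rule has_derivative_compose)
  moreover have "(\<lambda>s. G y \<bullet> (s *\<^sub>R (x - y))) = (*) (G y \<bullet> (x - y))" by (auto simp: fun_eq_iff)
  ultimately have "(f has_real_derivative (G y \<bullet> (x - y))) (at 0)"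
    by (simp add: has_field_derivative_def)
  from has_real_derivative_pos_inc_right[OF this pos]
  obtain d where d: "d > 0" "\<forall>h>0. h < d \<longrightarrow> f 0 < f h" by auto
  have "((\<lambda>h. y + h *\<^sub>R (x - y)) \<longlongrightarrow> y) (at_right 0)"
    by (auto intro!: tendsto_eq_intros)
  from topological_tendstoD[OF this U]
  have "\<forall>\<^sub>F h in at_right 0. y + h *\<^sub>R (x - y) \<in> U \<and> h < min d 1"
    using d(1) by (auto simp: eventually_conj_iff eventually_at_right_field intro: exI[of _ "min d 1"])
  then obtain h where h: "h > 0" "h < d" "h < 1" "y + h *\<^sub>R (x - y) \<in> U"
    using exists_pos_if_eventually_at_right by force
  have "y - h *\<^sub>R (y - x) \<in> interior \<Omega>"
    by (rule mem_interior_closure_convex_shrink[OF cvx]) (use x op yc h in \<open>auto simp: interior_open\<close>)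
  then have "f h < 0" using op in\<Omega> h(4) by (auto simp: f_def interior_open algebra_simps)
  then show False using d h \<rho>y by (force simp: f_def)
qed

lemma convex_C1_boundary_inner_normal_neg:
  fixes \<Omega> :: "'a::euclidean_space set"
  assumes bdry: "C1_boundary_normal \<Omega> \<nu>" and cvx: "convex \<Omega>" and op: "open \<Omega>"
    and y: "y \<in> frontier \<Omega>"
  shows "\<forall>x\<in>\<Omega>. (x - y) \<bullet> \<nu> y < 0"
proof
  fix x assume x: "x \<in> \<Omega>"
  have "norm (\<nu> y) = 1"
    using bspec[OF bdry[unfolded C1_boundary_normal_def] y] by auto
  moreover obtain r0 where r0: "r0 > 0" "ball x r0 \<subseteq> \<Omega>" using op x open_contains_ball by blast
  ultimately have "x + (r0 / 2) *\<^sub>R \<nu> y \<in> \<Omega>" by (auto simp: dist_norm subset_iff)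
  from convex_C1_boundary_inner_normal_le[OF bdry cvx op y this]
  have "(x - y) \<bullet> \<nu> y + r0 / 2 \<le> 0"
    using \<open>norm (\<nu> y) = 1\<close> by (simp add: inner_add_left inner_diff_left dot_square_norm algebra_simps)
  then show "(x - y) \<bullet> \<nu> y < 0" using r0 by linarith
qed

lemma convex_C1_boundary_inner_normal_le_closure:
  fixes \<Omega> :: "'a::euclidean_space set"
  assumes bdry: "C1_boundary_normal \<Omega> \<nu>" and cvx: "convex \<Omega>" and op: "open \<Omega>"
    and y: "y \<in> frontier \<Omega>"
  shows "\<forall>x\<in>closure \<Omega>. (x - y) \<bullet> \<nu> y \<le> 0"
proof -
  have "\<Omega> \<subseteq> {x. \<nu> y \<bullet> x \<le> \<nu> y \<bullet> y}"
    using convex_C1_boundary_inner_normal_le[OF bdry cvx op y]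
    by (auto simp: inner_diff_left inner_commute[of "\<nu> y"])
  then have "closure \<Omega> \<subseteq> {x. \<nu> y \<bullet> x \<le> \<nu> y \<bullet> y}"
    by (rule closure_minimal) (rule closed_halfspace_le)
  then show ?thesis by (auto simp: inner_diff_left inner_commute[of "\<nu> y"])
qed

lemma power2_norm_diff_expand: "(norm (x - z))\<^sup>2 = (norm (y - z))\<^sup>2 + 2 * ((y - z) \<bullet> (x - y)) + (norm (x - y))\<^sup>2"
  for x y z :: "'a::real_inner"
proof -
  have "x - z = (y - z) + (x - y)" by simp
  then have "(norm (x - z))\<^sup>2 = ((y - z) + (x - y)) \<bullet> ((y - z) + (x - y))"
    by (metis power2_norm_eq_inner)
  also have "\<dots> = (norm (y - z))\<^sup>2 + 2 * ((y - z) \<bullet> (x - y)) + (norm (x - y))\<^sup>2"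
    by (simp only: inner_add_left inner_add_right power2_norm_eq_inner inner_commute[of "x - y" "y - z"])
  finally show ?thesis .
qed

lemma radial_test_inequality:
  fixes \<Omega> A :: "'a::euclidean_space set" and G G1 G2 :: "real \<Rightarrow> real"
  assumes sub: "visc_subsol \<Omega> A \<nu> \<beta> k u"
    and bdry: "C1_boundary_normal \<Omega> \<nu>" and op: "open \<Omega>"
    and GN: "frontier \<Omega> \<inter> A \<noteq> {} \<longrightarrow> convex \<Omega>"
    and x0: "x0 \<in> closure \<Omega>" and z: "z \<in> \<Omega>" and \<tau>: "\<tau> > 0"
    and d1: "\<forall>t\<in>{0..r}. (G has_real_derivative G1 t) (at t within {0..r})"
    and d2: "\<forall>t\<in>{0..r}. (G1 has_real_derivative G2 t) (at t within {0..r})"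
    and c2: "continuous_on {0..r} G2"
    and y: "y \<in> \<Omega> \<union> (frontier \<Omega> \<inter> A)" "0 < norm (y - x0)" "norm (y - x0) < r"
    and g1: "G1 (norm (y - x0)) \<ge> 0" and \<eta>: "0 < \<eta>" "\<eta> \<le> 1"
    and lm: "\<exists>e>0. \<forall>x\<in>closure \<Omega> \<inter> ball y e.
       u x - (G (norm (x - x0)) + \<tau> / 2 * (norm (x - z))\<^sup>2) \<le> u y - (G (norm (y - x0)) + \<tau> / 2 * (norm (y - z))\<^sup>2)"
  defines "t0 \<equiv> norm (y - x0)" and "e \<equiv> (y - x0) /\<^sub>R norm (y - x0)"
  shows "- inf_lap_plus (G1 t0 *\<^sub>R e + \<tau> *\<^sub>R (y - z))
           (quad_hessian (G1 t0 * (1 + \<eta>) / t0 + \<eta> + \<tau>) (G2 t0 + 2 * \<eta> - (G1 t0 * (1 + \<eta>) / t0 + \<eta>)) e)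
         - \<beta> * norm (G1 t0 *\<^sub>R e + \<tau> *\<^sub>R (y - z)) \<le> k"
proof -
  define \<Phi> where "\<Phi> x = G (norm (x - x0)) + \<tau> / 2 * (norm (x - z))\<^sup>2" for x
  define p where "p = G1 t0 *\<^sub>R e + \<tau> *\<^sub>R (y - z)"
  define a' where "a' = G1 t0 * (1 + \<eta>) / t0 + \<eta>"
  define b where "b = G2 t0 + 2 * \<eta> - a'"
  obtain \<epsilon> where \<epsilon>: "\<epsilon> > 0" "\<forall>x. norm (x - y) < \<epsilon> \<longrightarrow> G (norm (x - x0)) \<le> G t0 + G1 t0 * (e \<bullet> (x - y))
           + (a' * (norm (x - y))\<^sup>2 + b * (e \<bullet> (x - y))\<^sup>2) / 2"
    using radial_quadratic_upper_bound[OF d1 d2 c2 y(2) y(3) g1 \<eta>] unfolding t0_def e_def a'_def b_def by blast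
  have ub: "\<exists>\<epsilon>>0. \<forall>x. norm (x - y) < \<epsilon> \<longrightarrow>
              \<Phi> x \<le> \<Phi> y + p \<bullet> (x - y) + ((a' + \<tau>) * (norm (x - y))\<^sup>2 + b * (e \<bullet> (x - y))\<^sup>2) / 2"
  proof (intro exI[of _ \<epsilon>] conjI allI impI)
    fix x assume "norm (x - y) < \<epsilon>"
    then have "G (norm (x - x0)) \<le> G t0 + G1 t0 * (e \<bullet> (x - y))
           + (a' * (norm (x - y))\<^sup>2 + b * (e \<bullet> (x - y))\<^sup>2) / 2" using \<epsilon> by blast
    moreover have "\<tau> / 2 * (norm (x - z))\<^sup>2 = \<tau> / 2 * (norm (y - z))\<^sup>2 + \<tau> * ((y - z) \<bullet> (x - y)) + \<tau> / 2 * (norm (x - y))\<^sup>2"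
      by (simp add: power2_norm_diff_expand[of x z y] distrib_left)
    moreover have "p \<bullet> (x - y) = G1 t0 * (e \<bullet> (x - y)) + \<tau> * ((y - z) \<bullet> (x - y))"
      by (simp add: p_def inner_add_left)
    moreover have "((a' + \<tau>) * (norm (x - y))\<^sup>2 + b * (e \<bullet> (x - y))\<^sup>2) / 2
       = (a' * (norm (x - y))\<^sup>2 + b * (e \<bullet> (x - y))\<^sup>2) / 2 + \<tau> / 2 * (norm (x - y))\<^sup>2"
      by (simp add: algebra_simps)
    ultimately show "\<Phi> x \<le> \<Phi> y + p \<bullet> (x - y) + ((a' + \<tau>) * (norm (x - y))\<^sup>2 + b * (e \<bullet> (x - y))\<^sup>2) / 2"
      unfolding \<Phi>_def t0_def by linarith
  qed (use \<epsilon> in auto)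
  have lm': "\<exists>e>0. \<forall>x\<in>closure \<Omega> \<inter> ball y e. u x - \<Phi> x \<le> u y - \<Phi> y"
    using lm by (simp add: \<Phi>_def)
  from visc_subsol_quadratic_test[OF sub y(1) lm' ub]
  have res: "- inf_lap_plus p (quad_hessian (a' + \<tau>) b e) - \<beta> * norm p \<le> k \<or> (y \<in> frontier \<Omega> \<inter> A \<and> p \<bullet> \<nu> y \<le> 0)" .
  have "\<not> (y \<in> frontier \<Omega> \<inter> A \<and> p \<bullet> \<nu> y \<le> 0)"
  proof
    assume yb: "y \<in> frontier \<Omega> \<inter> A \<and> p \<bullet> \<nu> y \<le> 0"
    then have cvx: "convex \<Omega>" using GN by blast
    have yf: "y \<in> frontier \<Omega>" using yb by blast
    have "(x0 - y) \<bullet> \<nu> y \<le> 0" using convex_C1_boundary_inner_normal_le_closure[OF bdry cvx op yf] x0 by blast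
    then have "e \<bullet> \<nu> y \<ge> 0" using y(2) unfolding e_def
      by (simp add: inner_diff_left divide_inverse)
    then have "G1 t0 * (e \<bullet> \<nu> y) \<ge> 0" using g1 t0_def by simp
    moreover have "(z - y) \<bullet> \<nu> y < 0" using convex_C1_boundary_inner_normal_neg[OF bdry cvx op yf] z by blast
    then have "\<tau> * ((y - z) \<bullet> \<nu> y) > 0" using \<tau> by (simp add: inner_diff_left)
    ultimately have "p \<bullet> \<nu> y > 0" by (simp add: p_def inner_add_left)
    then show False using yb by linarith
  qed
  with res have "- inf_lap_plus p (quad_hessian (a' + \<tau>) b e) - \<beta> * norm p \<le> k" by blast
  then show ?thesis by (simp only: p_def a'_def b_def)
qed

lemma radial_test_inequality_at_center:
  fixes \<Omega> A :: "'a::euclidean_space set" and G G1 G2 :: "real \<Rightarrow> real"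
  assumes sub: "visc_subsol \<Omega> A \<nu> \<beta> k u"
    and bdry: "C1_boundary_normal \<Omega> \<nu>" and op: "open \<Omega>"
    and GN: "frontier \<Omega> \<inter> A \<noteq> {} \<longrightarrow> convex \<Omega>"
    and z: "z \<in> \<Omega>" and \<tau>: "\<tau> > 0" and r: "r > 0"
    and d1: "\<forall>t\<in>{0..r}. (G has_real_derivative G1 t) (at t within {0..r})"
    and d2: "\<forall>t\<in>{0..r}. (G1 has_real_derivative G2 t) (at t within {0..r})"
    and c2: "continuous_on {0..r} G2" and g10: "G1 0 = 0"
    and y: "x0 \<in> \<Omega> \<union> (frontier \<Omega> \<inter> A)" and \<eta>: "0 < \<eta>"
    and lm: "\<exists>e>0. \<forall>x\<in>closure \<Omega> \<inter> ball x0 e.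
       u x - (G (norm (x - x0)) + \<tau> / 2 * (norm (x - z))\<^sup>2) \<le> u x0 - (G (norm (x0 - x0)) + \<tau> / 2 * (norm (x0 - z))\<^sup>2)"
  shows "- inf_lap_plus (\<tau> *\<^sub>R (x0 - z)) (quad_hessian (G2 0 + \<eta> + \<tau>) 0 e) - \<beta> * norm (\<tau> *\<^sub>R (x0 - z)) \<le> k"
proof -
  define \<Phi> where "\<Phi> x = G (norm (x - x0)) + \<tau> / 2 * (norm (x - z))\<^sup>2" for x
  define p where "p = \<tau> *\<^sub>R (x0 - z)"
  obtain dT where dT: "dT > 0" "\<forall>s\<in>{0..r}. \<bar>s - 0\<bar> < dT \<longrightarrow>
            G s \<le> G 0 + G1 0 * (s - 0) + (G2 0 + \<eta>) / 2 * (s - 0)\<^sup>2"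
    using second_order_upper_bound[OF d1 d2 c2, of 0 \<eta>] r \<eta> by auto
  have ub: "\<exists>\<epsilon>>0. \<forall>x. norm (x - x0) < \<epsilon> \<longrightarrow>
              \<Phi> x \<le> \<Phi> x0 + p \<bullet> (x - x0) + ((G2 0 + \<eta> + \<tau>) * (norm (x - x0))\<^sup>2 + 0 * (e \<bullet> (x - x0))\<^sup>2) / 2"
  proof (intro exI[of _ "min dT r"] conjI allI impI)
    fix x assume "norm (x - x0) < min dT r"
    then have "G (norm (x - x0)) \<le> G 0 + (G2 0 + \<eta>) / 2 * (norm (x - x0))\<^sup>2"
      using dT g10 by auto
    moreover have "\<tau> / 2 * (norm (x - z))\<^sup>2 = \<tau> / 2 * (norm (x0 - z))\<^sup>2 + \<tau> * ((x0 - z) \<bullet> (x - x0)) + \<tau> / 2 * (norm (x - x0))\<^sup>2"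
      by (simp add: power2_norm_diff_expand[of x z x0] distrib_left)
    moreover have "p \<bullet> (x - x0) = \<tau> * ((x0 - z) \<bullet> (x - x0))" by (simp add: p_def)
    moreover have "((G2 0 + \<eta> + \<tau>) * (norm (x - x0))\<^sup>2 + 0 * (e \<bullet> (x - x0))\<^sup>2) / 2
       = (G2 0 + \<eta>) / 2 * (norm (x - x0))\<^sup>2 + \<tau> / 2 * (norm (x - x0))\<^sup>2"
      by (simp add: algebra_simps)
    moreover have "G (norm (x0 - x0)) = G 0" by simp
    moreover have "(norm (x0 - x0))\<^sup>2 = 0" by simp
    ultimately show "\<Phi> x \<le> \<Phi> x0 + p \<bullet> (x - x0) + ((G2 0 + \<eta> + \<tau>) * (norm (x - x0))\<^sup>2 + 0 * (e \<bullet> (x - x0))\<^sup>2) / 2"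
      unfolding \<Phi>_def by linarith
  qed (use dT r in auto)
  have lm': "\<exists>e>0. \<forall>x\<in>closure \<Omega> \<inter> ball x0 e. u x - \<Phi> x \<le> u x0 - \<Phi> x0"
    using lm by (simp add: \<Phi>_def)
  from visc_subsol_quadratic_test[OF sub y lm' ub]
  have res: "- inf_lap_plus p (quad_hessian (G2 0 + \<eta> + \<tau>) 0 e) - \<beta> * norm p \<le> k \<or> (x0 \<in> frontier \<Omega> \<inter> A \<and> p \<bullet> \<nu> x0 \<le> 0)" .
  have "\<not> (x0 \<in> frontier \<Omega> \<inter> A \<and> p \<bullet> \<nu> x0 \<le> 0)"
  proof
    assume yb: "x0 \<in> frontier \<Omega> \<inter> A \<and> p \<bullet> \<nu> x0 \<le> 0"
    then have cvx: "convex \<Omega>" using GN by blast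
    have yf: "x0 \<in> frontier \<Omega>" using yb by blast
    have "(z - x0) \<bullet> \<nu> x0 < 0" using convex_C1_boundary_inner_normal_neg[OF bdry cvx op yf] z by blast
    then have "p \<bullet> \<nu> x0 > 0" using \<tau> by (simp add: p_def inner_diff_left)
    then show False using yb by linarith
  qed
  with res have "- inf_lap_plus p (quad_hessian (G2 0 + \<eta> + \<tau>) 0 e) - \<beta> * norm p \<le> k" by blast
  then show ?thesis by (simp only: p_def)
qed

section \<open>Perturbed radial functions cannot touch from above\<close>

lemma gradient_perturbation_bounds:
  fixes e v :: "'a::real_inner"
  assumes e: "norm e = 1" and g: "g \<ge> 0" and \<tau>: "\<tau> \<ge> 0"
  defines "p \<equiv> g *\<^sub>R e + \<tau> *\<^sub>R v"
  shows "(e \<bullet> p)\<^sup>2 \<le> (norm p)\<^sup>2" "(norm p)\<^sup>2 - (e \<bullet> p)\<^sup>2 \<le> (\<tau> * norm v)\<^sup>2"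
    "\<bar>norm p - g\<bar> \<le> \<tau> * norm v"
proof -
  have ee: "e \<bullet> e = 1" using e by (simp add: dot_square_norm)
  have "\<bar>e \<bullet> p\<bar> \<le> norm p" using Cauchy_Schwarz_ineq2[of e p] e by simp
  then show "(e \<bullet> p)\<^sup>2 \<le> (norm p)\<^sup>2" using abs_le_square_iff[of "e \<bullet> p" "norm p"] by simp
  have ep: "e \<bullet> p = g + \<tau> * (e \<bullet> v)" using ee by (simp add: p_def inner_add_right)
  have pp: "(norm p)\<^sup>2 = g\<^sup>2 + 2 * g * \<tau> * (e \<bullet> v) + \<tau>\<^sup>2 * (norm v)\<^sup>2"
    unfolding power2_norm_eq_inner p_def using ee
    by (simp add: inner_add_left inner_add_right inner_commute[of v e] power2_eq_square algebra_simps)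
  have "\<bar>e \<bullet> v\<bar> \<le> norm v" using Cauchy_Schwarz_ineq2[of e v] e by simp
  then have "(e \<bullet> v)\<^sup>2 \<le> (norm v)\<^sup>2" using abs_le_square_iff[of "e \<bullet> v" "norm v"] by simp
  then have "\<tau>\<^sup>2 * (e \<bullet> v)\<^sup>2 \<ge> 0" by simp
  then show "(norm p)\<^sup>2 - (e \<bullet> p)\<^sup>2 \<le> (\<tau> * norm v)\<^sup>2"
    unfolding pp ep by (simp add: power2_eq_square algebra_simps)
  have "\<bar>norm p - norm (g *\<^sub>R e)\<bar> \<le> norm (p - g *\<^sub>R e)" by (rule norm_triangle_ineq3)
  then show "\<bar>norm p - g\<bar> \<le> \<tau> * norm v" using e g \<tau> by (simp add: p_def)
qed

lemma quad_hessian_margin_absurd: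
  fixes P EP g1 g2 a b \<tau> \<rho> d M \<beta> k \<mu> \<eta> :: real
  assumes P: "P > 0" and EP: "EP\<^sup>2 \<le> P\<^sup>2" "P\<^sup>2 - EP\<^sup>2 \<le> \<rho>\<^sup>2"
    and \<rho>: "0 \<le> \<rho>" "\<rho> \<le> d * P" and d: "d \<ge> 0"
    and Pg: "\<bar>P - g1\<bar> \<le> \<rho>" and bM: "\<bar>b\<bar> \<le> M"
    and ab: "a + b = g2 + 2 * \<eta> + \<tau>"
    and ineq: "- (a + b * EP\<^sup>2 / P\<^sup>2) - \<beta> * P \<le> k"
    and margin: "k + \<mu> \<le> - g2 - \<beta> * g1"
    and small: "2 * \<eta> + \<tau> + \<bar>\<beta>\<bar> * \<rho> + M * d\<^sup>2 < \<mu>"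
  shows False
proof -
  define s where "s = (P\<^sup>2 - EP\<^sup>2) / P\<^sup>2"
  have P2: "P\<^sup>2 > 0" using P by simp
  have s0: "s \<ge> 0" using EP P2 by (simp add: s_def)
  have "\<rho>\<^sup>2 \<le> d\<^sup>2 * P\<^sup>2" using \<rho> power_mono[of \<rho> "d * P" 2] by (simp add: power_mult_distrib)
  then have s1: "s \<le> d\<^sup>2" using EP P2 by (simp add: s_def divide_le_eq)
  have "b * EP\<^sup>2 / P\<^sup>2 = b - b * s" using P2 by (simp add: s_def field_simps)
  moreover have "- (b * s) \<le> M * d\<^sup>2"
  proof -
    have "- (b * s) \<le> \<bar>b\<bar> * s" using s0 mult_right_mono[of "- b" "\<bar>b\<bar>" s] by simp
    also have "\<dots> \<le> M * d\<^sup>2" using mult_mono[OF bM s1 order_trans[OF abs_ge_zero bM] s0] .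
    finally show ?thesis .
  qed
  moreover have "\<beta> * (P - g1) \<le> \<bar>\<beta>\<bar> * \<bar>P - g1\<bar>" by (metis abs_ge_self abs_mult)
  then have "\<beta> * P - \<beta> * g1 \<le> \<bar>\<beta>\<bar> * \<rho>"
    using mult_left_mono[OF Pg, of "\<bar>\<beta>\<bar>"] by (simp add: right_diff_distrib)
  ultimately show False using ineq margin small ab by linarith
qed

lemma radial_touching_absurd:
  fixes \<Omega> A :: "'a::euclidean_space set" and G G1 G2 :: "real \<Rightarrow> real"
  assumes sub: "visc_subsol \<Omega> A \<nu> \<beta> k u"
    and bdry: "C1_boundary_normal \<Omega> \<nu>" and op: "open \<Omega>"
    and GN: "frontier \<Omega> \<inter> A \<noteq> {} \<longrightarrow> convex \<Omega>"
    and x0: "x0 \<in> closure \<Omega>" and z: "z \<in> \<Omega>" and \<tau>: "\<tau> > 0"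
    and d1: "\<forall>t\<in>{0..r}. (G has_real_derivative G1 t) (at t within {0..r})"
    and d2: "\<forall>t\<in>{0..r}. (G1 has_real_derivative G2 t) (at t within {0..r})"
    and c2: "continuous_on {0..r} G2"
    and y: "y \<in> \<Omega> \<union> (frontier \<Omega> \<inter> A)" "0 < norm (y - x0)" "norm (y - x0) < r"
    and lm: "\<exists>e>0. \<forall>x\<in>closure \<Omega> \<inter> ball y e.
       u x - (G (norm (x - x0)) + \<tau> / 2 * (norm (x - z))\<^sup>2)
         \<le> u y - (G (norm (y - x0)) + \<tau> / 2 * (norm (y - z))\<^sup>2)"
    and g: "0 < g" "g \<le> G1 (norm (y - x0))"
    and M: "\<bar>G2 (norm (y - x0))\<bar> + 2 * G1 (norm (y - x0)) / norm (y - x0) + 1 \<le> M"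
    and V: "norm (y - z) \<le> V" "\<tau> * V \<le> g / 2"
    and margin: "k + \<mu> \<le> - G2 (norm (y - x0)) - \<beta> * G1 (norm (y - x0))"
    and small: "\<tau> + \<bar>\<beta>\<bar> * (\<tau> * V) + M * (2 * \<tau> * V / g)\<^sup>2 < \<mu> / 2"
  shows False
proof -
  define t0 where "t0 = norm (y - x0)"
  define e where "e = (y - x0) /\<^sub>R norm (y - x0)"
  define \<eta> where "\<eta> = min 1 (\<mu> / 8)"
  define p where "p = G1 t0 *\<^sub>R e + \<tau> *\<^sub>R (y - z)"
  define a where "a = G1 t0 * (1 + \<eta>) / t0 + \<eta> + \<tau>"
  define b where "b = G2 t0 + 2 * \<eta> - (G1 t0 * (1 + \<eta>) / t0 + \<eta>)"
  define d where "d = 2 * \<tau> * V / g"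
  have t0: "t0 > 0" using y by (simp add: t0_def)
  have g1: "G1 t0 \<ge> 0" using g by (simp add: t0_def)
  have slope: "0 \<le> G1 t0 / t0" using g1 t0 by simp
  have V0: "V \<ge> 0" using V(1) norm_ge_zero order_trans by blast
  have "0 \<le> 2 * G1 t0 / t0" using g1 t0 by simp
  then have M0: "M \<ge> 1" using M abs_ge_zero[of "G2 t0"] unfolding t0_def by linarith
  have "0 \<le> \<tau> + \<bar>\<beta>\<bar> * (\<tau> * V) + M * d\<^sup>2"
    by (intro add_nonneg_nonneg mult_nonneg_nonneg) (use \<tau> V0 M0 in auto)
  then have \<mu>0: "\<mu> > 0" using small by (simp add: d_def)
  then have \<eta>: "0 < \<eta>" "\<eta> \<le> 1" "2 * \<eta> \<le> \<mu> / 4" by (auto simp: \<eta>_def)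
  have e1: "norm e = 1" using y by (simp add: e_def)
  note pf = gradient_perturbation_bounds[OF e1 g1 less_imp_le[OF \<tau>], of "y - z", folded p_def]
  have "- inf_lap_plus p (quad_hessian a b e) - \<beta> * norm p \<le> k"
    using radial_test_inequality[OF sub bdry op GN x0 z \<tau> d1 d2 c2 y g1[unfolded t0_def] \<eta>(1,2) lm]
    unfolding p_def a_def b_def t0_def e_def .
  moreover have \<rho>: "\<tau> * norm (y - z) \<le> \<tau> * V" using V(1) \<tau> by simp
  then have P: "g / 2 \<le> norm p" using pf(3) g V(2) unfolding t0_def by linarith
  moreover have "p \<noteq> 0" using P g by auto
  ultimately have ineq: "- (a + b * (e \<bullet> p)\<^sup>2 / (norm p)\<^sup>2) - \<beta> * norm p \<le> k"
    using inf_lap_plus_quad_hessian[of p a b e] by simp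
  have "G1 t0 * (1 + \<eta>) / t0 \<le> 2 * G1 t0 / t0"
    using slope \<eta> mult_left_mono[of "1 + \<eta>" 2 "G1 t0 / t0"] by (simp add: mult.commute)
  moreover have "0 \<le> G1 t0 * (1 + \<eta>) / t0" using g1 t0 \<eta> by simp
  ultimately have bM: "\<bar>b\<bar> \<le> M"
    using M[folded t0_def] \<eta> abs_ge_self[of "G2 t0"] abs_ge_minus_self[of "G2 t0"]
    unfolding b_def abs_le_iff by linarith
  have d0: "0 \<le> d" using \<tau> V0 g by (simp add: d_def)
  have "d * (g / 2) = \<tau> * V" using g by (simp add: d_def)
  moreover have "d * (g / 2) \<le> d * norm p" using P d0 by (rule mult_left_mono)
  ultimately have \<rho>d: "\<tau> * norm (y - z) \<le> d * norm p" using \<rho> by linarith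
  have small': "2 * \<eta> + \<tau> + \<bar>\<beta>\<bar> * (\<tau> * norm (y - z)) + M * d\<^sup>2 < \<mu>"
    using small \<eta>(3) \<mu>0 mult_left_mono[OF \<rho> abs_ge_zero[of \<beta>]] unfolding d_def by linarith
  have ab: "a + b = G2 t0 + 2 * \<eta> + \<tau>" by (simp add: a_def b_def)
  have "0 < norm p" using P g by linarith
  moreover have "0 \<le> \<tau> * norm (y - z)" using \<tau> by simp
  ultimately show False
    using quad_hessian_margin_absurd[OF _ pf(1,2) _ \<rho>d d0 pf(3) bM ab ineq margin[folded t0_def] small']
    by blast
qed

lemma radial_touching_absurd_near_center:
  fixes \<Omega> A :: "'a::euclidean_space set" and G G1 G2 :: "real \<Rightarrow> real"
  assumes sub: "visc_subsol \<Omega> A \<nu> \<beta> k u"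
    and bdry: "C1_boundary_normal \<Omega> \<nu>" and op: "open \<Omega>"
    and GN: "frontier \<Omega> \<inter> A \<noteq> {} \<longrightarrow> convex \<Omega>"
    and x0: "x0 \<in> closure \<Omega>" and z: "z \<in> \<Omega>" and \<tau>: "\<tau> > 0"
    and d1: "\<forall>t\<in>{0..r}. (G has_real_derivative G1 t) (at t within {0..r})"
    and d2: "\<forall>t\<in>{0..r}. (G1 has_real_derivative G2 t) (at t within {0..r})"
    and c2: "continuous_on {0..r} G2"
    and y: "y \<in> \<Omega> \<union> (frontier \<Omega> \<inter> A)" "0 < norm (y - x0)" "norm (y - x0) < r"
    and lm: "\<exists>e>0. \<forall>x\<in>closure \<Omega> \<inter> ball y e.
       u x - (G (norm (x - x0)) + \<tau> / 2 * (norm (x - z))\<^sup>2)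
         \<le> u y - (G (norm (y - x0)) + \<tau> / 2 * (norm (y - z))\<^sup>2)"
    and G1: "0 \<le> G1 (norm (y - x0))" "G1 (norm (y - x0)) \<le> L * norm (y - x0)"
    and V: "norm (y - z) \<le> V"
    and slope: "L + \<bar>\<beta>\<bar> * (L * norm (y - x0) + \<tau> * V) + \<tau> < - k"
    and margin: "k + \<mu> \<le> - G2 (norm (y - x0)) - \<beta> * G1 (norm (y - x0))"
    and small: "\<tau> + \<bar>\<beta>\<bar> * (\<tau> * V) < \<mu>"
  shows False
proof -
  define t0 where "t0 = norm (y - x0)"
  define e where "e = (y - x0) /\<^sub>R norm (y - x0)"
  define gap where "gap = min (- k - (L + \<bar>\<beta>\<bar> * (L * t0 + \<tau> * V) + \<tau>)) (\<mu> - (\<tau> + \<bar>\<beta>\<bar> * (\<tau> * V)))"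
  have t0: "t0 > 0" using y by (simp add: t0_def)
  have "0 \<le> L * t0" using G1 by (simp add: t0_def)
  then have L: "G1 t0 / t0 \<le> L" "0 \<le> L"
    using G1 t0 by (auto simp: t0_def pos_divide_le_eq zero_le_mult_iff)
  define \<eta> where "\<eta> = min 1 (gap / (2 * (L + 2)))"
  have gap: "gap > 0" using slope small by (simp add: gap_def t0_def)
  then have \<eta>0: "0 < \<eta>" "\<eta> \<le> 1" using L by (auto simp: \<eta>_def)
  have "(L + 2) * \<eta> \<le> (L + 2) * (gap / (2 * (L + 2)))"
    using L by (intro mult_left_mono) (auto simp: \<eta>_def)
  also have "\<dots> = gap / 2" using L by (simp add: field_simps)
  finally have "L * \<eta> + 2 * \<eta> \<le> gap / 2" by (simp add: algebra_simps)
  moreover have "0 \<le> L * \<eta>" using L \<eta>0 by simp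
  ultimately have \<eta>: "0 < \<eta>" "\<eta> \<le> 1" "L * \<eta> + \<eta> < gap" "2 * \<eta> < gap"
    using \<eta>0 gap by auto
  have gap_le: "gap \<le> - k - (L + \<bar>\<beta>\<bar> * (L * t0 + \<tau> * V) + \<tau>)" "gap \<le> \<mu> - (\<tau> + \<bar>\<beta>\<bar> * (\<tau> * V))"
    by (simp_all add: gap_def)
  define p where "p = G1 t0 *\<^sub>R e + \<tau> *\<^sub>R (y - z)"
  define a where "a = G1 t0 * (1 + \<eta>) / t0 + \<eta> + \<tau>"
  define b where "b = G2 t0 + 2 * \<eta> - (G1 t0 * (1 + \<eta>) / t0 + \<eta>)"
  have e1: "norm e = 1" using y by (simp add: e_def)
  have "- inf_lap_plus p (quad_hessian a b e) - \<beta> * norm p \<le> k"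
    using radial_test_inequality[OF sub bdry op GN x0 z \<tau> d1 d2 c2 y G1(1) \<eta>(1,2) lm]
    unfolding p_def a_def b_def t0_def e_def .
  with inf_lap_plus_quad_hessian_le[OF e1, of p a b]
  have ineq: "- max a (a + b) - \<beta> * norm p \<le> k" by linarith
  have "\<tau> * norm (y - z) \<le> \<tau> * V" using V \<tau> by simp
  then have Pg: "\<bar>norm p - G1 t0\<bar> \<le> \<tau> * V"
    using gradient_perturbation_bounds(3)[OF e1 G1(1)[folded t0_def] less_imp_le[OF \<tau>], of "y - z"]
    unfolding p_def by linarith
  have "\<beta> * (norm p - G1 t0) \<le> \<bar>\<beta>\<bar> * \<bar>norm p - G1 t0\<bar>" by (metis abs_ge_self abs_mult)
  then have "\<beta> * norm p \<le> \<beta> * G1 t0 + \<bar>\<beta>\<bar> * (\<tau> * V)"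
    using mult_left_mono[OF Pg abs_ge_zero[of \<beta>]] by (simp add: right_diff_distrib)
  moreover have "a + b = G2 t0 + 2 * \<eta> + \<tau>" by (simp add: a_def b_def)
  ultimately have ab: "a + b < - k - \<beta> * norm p"
    using margin[folded t0_def] \<eta>(4) gap_le(2) by linarith
  have "G1 t0 * (1 + \<eta>) / t0 \<le> L * (1 + \<eta>)"
    using L \<eta> mult_right_mono[of "G1 t0 / t0" L "1 + \<eta>"] by simp
  then have "a \<le> L + L * \<eta> + \<eta> + \<tau>" by (simp add: a_def algebra_simps)
  moreover have "norm p \<le> L * t0 + \<tau> * V"
    using Pg G1(2)[folded t0_def] unfolding abs_le_iff by linarith
  then have "\<bar>\<beta>\<bar> * norm p \<le> \<bar>\<beta>\<bar> * (L * t0 + \<tau> * V)" by (simp add: mult_left_mono)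
  moreover have "\<beta> * norm p \<le> \<bar>\<beta>\<bar> * norm p" by (simp add: mult_right_mono)
  ultimately have "a < - k - \<beta> * norm p" using \<eta>(3) gap_le(1) by linarith
  with ab have "max a (a + b) < - k - \<beta> * norm p" by simp
  with ineq show False by linarith
qed

lemma radial_touching_absurd_at_center:
  fixes \<Omega> A :: "'a::euclidean_space set" and G G1 G2 :: "real \<Rightarrow> real"
  assumes sub: "visc_subsol \<Omega> A \<nu> \<beta> k u"
    and bdry: "C1_boundary_normal \<Omega> \<nu>" and op: "open \<Omega>"
    and GN: "frontier \<Omega> \<inter> A \<noteq> {} \<longrightarrow> convex \<Omega>"
    and z: "z \<in> \<Omega>" and \<tau>: "\<tau> > 0" and r: "r > 0"
    and d1: "\<forall>t\<in>{0..r}. (G has_real_derivative G1 t) (at t within {0..r})"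
    and d2: "\<forall>t\<in>{0..r}. (G1 has_real_derivative G2 t) (at t within {0..r})"
    and c2: "continuous_on {0..r} G2" and g10: "G1 0 = 0"
    and x0: "x0 \<in> \<Omega> \<union> (frontier \<Omega> \<inter> A)"
    and lm: "\<exists>e>0. \<forall>x\<in>closure \<Omega> \<inter> ball x0 e.
       u x - (G (norm (x - x0)) + \<tau> / 2 * (norm (x - z))\<^sup>2)
         \<le> u x0 - (G (norm (x0 - x0)) + \<tau> / 2 * (norm (x0 - z))\<^sup>2)"
    and V: "norm (x0 - z) \<le> V"
    and margin: "k + \<mu> \<le> - G2 0"
    and small: "\<tau> + \<bar>\<beta>\<bar> * (\<tau> * V) < \<mu>"
  shows False
proof -
  define \<eta> where "\<eta> = (\<mu> - (\<tau> + \<bar>\<beta>\<bar> * (\<tau> * V))) / 2"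
  have \<eta>: "\<eta> > 0" using small by (simp add: \<eta>_def)
  obtain e :: 'a where e: "norm e = 1" using norm_Basis nonempty_Basis by blast
  have "- inf_lap_plus (\<tau> *\<^sub>R (x0 - z)) (quad_hessian (G2 0 + \<eta> + \<tau>) 0 e)
          - \<beta> * norm (\<tau> *\<^sub>R (x0 - z)) \<le> k"
    by (rule radial_test_inequality_at_center[OF sub bdry op GN z \<tau> r d1 d2 c2 g10 x0 \<eta> lm])
  moreover have "inf_lap_plus (\<tau> *\<^sub>R (x0 - z)) (quad_hessian (G2 0 + \<eta> + \<tau>) 0 e) \<le> G2 0 + \<eta> + \<tau>"
    using inf_lap_plus_quad_hessian_le[OF e] by (metis add_0_right max.idem)
  moreover have "\<beta> * norm (\<tau> *\<^sub>R (x0 - z)) \<le> \<bar>\<beta>\<bar> * norm (\<tau> *\<^sub>R (x0 - z))"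
    by (simp add: mult_right_mono)
  then have "\<beta> * norm (\<tau> *\<^sub>R (x0 - z)) \<le> \<bar>\<beta>\<bar> * (\<tau> * norm (x0 - z))"
    using \<tau> by simp
  moreover have "\<bar>\<beta>\<bar> * (\<tau> * norm (x0 - z)) \<le> \<bar>\<beta>\<bar> * (\<tau> * V)"
    using V \<tau> by (simp add: mult_left_mono)
  moreover have "2 * \<eta> = \<mu> - (\<tau> + \<bar>\<beta>\<bar> * (\<tau> * V))" by (simp add: \<eta>_def)
  ultimately show False using margin small by linarith
qed

section \<open>Maxima over the ball\<close>

lemma bounded_closure_dist_bound:
  fixes \<Omega> :: "'a::real_normed_vector set"
  assumes "bounded \<Omega>"
  shows "\<exists>V>0. \<forall>x\<in>closure \<Omega>. norm (x - z) \<le> V"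
proof -
  obtain B where "B > 0" "\<forall>x\<in>closure \<Omega>. norm x \<le> B"
    using bounded_closure[OF assms] unfolding bounded_pos by blast
  then show ?thesis
  proof (intro exI[of _ "B + norm z"] conjI ballI)
    fix x assume "x \<in> closure \<Omega>"
    then show "norm (x - z) \<le> B + norm z"
      using \<open>\<forall>x\<in>closure \<Omega>. norm x \<le> B\<close> norm_triangle_ineq4[of x z] by fastforce
  qed (simp add: add_pos_nonneg)
qed

lemma Lambda_nonempty:
  fixes \<Omega> A :: "'a::euclidean_space set"
  assumes conn: "connected \<Omega>" and GD: "frontier \<Omega> - A \<noteq> {}"
    and x0: "x0 \<in> closure \<Omega>" and r: "r > 0"
  shows "(sphere x0 r \<inter> closure \<Omega>) \<union> (ball x0 r \<inter> (frontier \<Omega> - A)) \<noteq> {}"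
proof -
  obtain q where q: "q \<in> frontier \<Omega>" "q \<notin> A" using GD by blast
  show ?thesis
  proof (cases "norm (q - x0) < r")
    case True
    then have "q \<in> ball x0 r" by (simp add: dist_norm norm_minus_commute)
    then show ?thesis using q by blast
  next
    case False
    have "connected ((\<lambda>x. norm (x - x0)) ` closure \<Omega>)"
      by (intro connected_continuous_image connected_imp_connected_closure conn)
         (auto intro!: continuous_intros)
    moreover have "0 \<in> (\<lambda>x. norm (x - x0)) ` closure \<Omega>" using x0 by force
    moreover have "norm (q - x0) \<in> (\<lambda>x. norm (x - x0)) ` closure \<Omega>"
      using q by (auto simp: frontier_def)
    ultimately have "r \<in> (\<lambda>x. norm (x - x0)) ` closure \<Omega>"
      using connectedD_interval[of _ 0 "norm (q - x0)" r] False r by auto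
    then obtain x where "x \<in> closure \<Omega>" "norm (x - x0) = r" by auto
    then have "x \<in> sphere x0 r \<inter> closure \<Omega>" by (simp add: dist_norm norm_minus_commute)
    then show ?thesis by blast
  qed
qed

lemma maximizer_off_Lambda:
  fixes \<Omega> A :: "'a::euclidean_space set" and F :: "'a \<Rightarrow> real"
  assumes op: "open \<Omega>" and y: "y \<in> cball x0 r \<inter> closure \<Omega>"
    and max: "\<forall>x\<in>cball x0 r \<inter> closure \<Omega>. F x \<le> F y"
    and off: "y \<notin> (sphere x0 r \<inter> closure \<Omega>) \<union> (ball x0 r \<inter> (frontier \<Omega> - A))"
  shows "norm (y - x0) < r" "y \<in> \<Omega> \<union> (frontier \<Omega> \<inter> A)"
    "\<exists>e>0. \<forall>x\<in>closure \<Omega> \<inter> ball y e. F x \<le> F y"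
proof -
  show yr: "norm (y - x0) < r"
    using y off by (auto simp: dist_norm norm_minus_commute le_less)
  show "y \<in> \<Omega> \<union> (frontier \<Omega> \<inter> A)"
    using y off yr op by (auto simp: frontier_def interior_open dist_norm norm_minus_commute)
  have "x \<in> cball x0 r" if "x \<in> ball y (r - norm (y - x0))" for x
    using that norm_triangle_ineq[of "x - y" "y - x0"] by (simp add: dist_norm norm_minus_commute)
  then show "\<exists>e>0. \<forall>x\<in>closure \<Omega> \<inter> ball y e. F x \<le> F y"
    using yr max by (intro exI[of _ "r - norm (y - x0)"]) auto
qed

lemma usc_on_radial_difference:
  fixes \<Omega> :: "'a::euclidean_space set"
  assumes "visc_subsol \<Omega> A \<nu> \<beta> k u" "continuous_on {0..r} \<gamma>"
  shows "usc_on (cball x0 r \<inter> closure \<Omega>) (\<lambda>x. u x - \<gamma> (norm (x - x0)))"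
proof (rule usc_on_diff_continuous)
  show "usc_on (cball x0 r \<inter> closure \<Omega>) u"
    using assms(1) unfolding visc_subsol_def by (auto intro: usc_on_subset)
  show "continuous_on (cball x0 r \<inter> closure \<Omega>) (\<lambda>x. \<gamma> (norm (x - x0)))"
    by (rule continuous_on_compose2[OF assms(2)])
       (auto intro!: continuous_intros simp: dist_norm norm_minus_commute)
qed

lemma raised_profile_no_interior_maximizer:
  fixes \<Omega> A :: "'a::euclidean_space set" and \<gamma> \<gamma>1 \<gamma>2 :: "real \<Rightarrow> real"
  assumes sub: "visc_subsol \<Omega> A \<nu> \<beta> k u"
    and bdry: "C1_boundary_normal \<Omega> \<nu>" and op: "open \<Omega>"
    and GN: "frontier \<Omega> \<inter> A \<noteq> {} \<longrightarrow> convex \<Omega>"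
    and g1: "\<forall>t\<in>{0..r}. (\<gamma> has_real_derivative \<gamma>1 t) (at t within {0..r})"
    and g2: "\<forall>t\<in>{0..r}. (\<gamma>1 has_real_derivative \<gamma>2 t) (at t within {0..r})"
    and g2c: "continuous_on {0..r} \<gamma>2"
    and ode: "\<forall>t\<in>{0<..<r}. - \<gamma>2 t - \<beta> * \<bar>\<gamma>1 t\<bar> = k"
    and gpos: "\<forall>t\<in>{0<..<r}. \<gamma>1 t > 0"
    and x0: "x0 \<in> closure \<Omega>" and z: "z \<in> \<Omega>" and \<tau>: "\<tau> > 0" and \<delta>: "\<delta> > 0"
    and C: "C = \<bar>\<beta>\<bar> + 1"
    and V: "\<forall>x\<in>closure \<Omega>. norm (x - z) \<le> V"
    and G1m: "\<forall>t\<in>{0..r}. \<bar>\<gamma>1 t\<bar> \<le> G1m" and G2m: "\<forall>t\<in>{0..r}. \<bar>\<gamma>2 t\<bar> \<le> G2m"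
    and y: "y \<in> cball x0 r \<inter> closure \<Omega>"
      "y \<notin> (sphere x0 r \<inter> closure \<Omega>) \<union> (ball x0 r \<inter> (frontier \<Omega> - A))"
      "0 < \<rho>0" "\<rho>0 \<le> norm (y - x0)"
    and ymax: "\<forall>x\<in>cball x0 r \<inter> closure \<Omega>.
      u x - (\<gamma> (norm (x - x0)) + \<delta> * (1 - exp (- C * norm (x - x0))) + \<tau> / 2 * (norm (x - z))\<^sup>2)
      \<le> u y - (\<gamma> (norm (y - x0)) + \<delta> * (1 - exp (- C * norm (y - x0))) + \<tau> / 2 * (norm (y - z))\<^sup>2)"
    and \<tau>V: "\<tau> * V \<le> \<delta> * C * exp (- C * r) / 2"
    and small: "\<tau> + \<bar>\<beta>\<bar> * (\<tau> * V) + (G2m + \<delta> * C\<^sup>2 + 2 * (G1m + \<delta> * C) / \<rho>0 + 1)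
       * (2 * \<tau> * V / (\<delta> * C * exp (- C * r)))\<^sup>2 < \<delta> * C * exp (- C * r) / 2"
  shows False
proof -
  define \<Gamma> where "\<Gamma> t = \<gamma> t + \<delta> * (1 - exp (- C * t))" for t
  define \<Gamma>1 where "\<Gamma>1 t = \<gamma>1 t + \<delta> * C * exp (- C * t)" for t
  define \<Gamma>2 where "\<Gamma>2 t = \<gamma>2 t - \<delta> * C\<^sup>2 * exp (- C * t)" for t
  note \<Gamma>' = raised_profile[OF g1 g2 g2c ode gpos \<delta> C \<Gamma>_def \<Gamma>1_def \<Gamma>2_def]
  define t0 where "t0 = norm (y - x0)"
  note loc = maximizer_off_Lambda[OF op y(1) _ y(2)]
  have lm: "\<exists>e>0. \<forall>x\<in>closure \<Omega> \<inter> ball y e. u x - (\<Gamma> (norm (x - x0)) + \<tau> / 2 * (norm (x - z))\<^sup>2)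
      \<le> u y - (\<Gamma> (norm (y - x0)) + \<tau> / 2 * (norm (y - z))\<^sup>2)"
    using loc(3)[of "\<lambda>x. u x - (\<Gamma> (norm (x - x0)) + \<tau> / 2 * (norm (x - z))\<^sup>2)"] ymax
    by (simp add: \<Gamma>_def add.assoc)
  have t0: "t0 \<in> {0<..<r}" "t0 \<in> {0..r}" "\<rho>0 \<le> t0"
    using loc(1)[OF ymax] y(3,4) by (auto simp: t0_def)
  have "0 < \<delta> * C * exp (- C * r)" using \<delta> C by simp
  moreover have "\<delta> * C * exp (- C * r) \<le> \<Gamma>1 t0" using \<Gamma>'(4) t0(1) by blast
  ultimately have "0 \<le> \<Gamma>1 t0" by linarith
  moreover have "\<bar>\<gamma>1 t0\<bar> \<le> G1m" "\<Gamma>1 t0 \<le> \<gamma>1 t0 + \<delta> * C" using G1m \<Gamma>'(6) t0(2) by blast+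
  then have "\<Gamma>1 t0 \<le> G1m + \<delta> * C" by (meson abs_ge_self add_right_mono order_trans)
  ultimately have "\<Gamma>1 t0 / t0 \<le> (G1m + \<delta> * C) / \<rho>0" by (intro frac_le) (use t0 y(3) in auto)
  moreover have "\<bar>\<Gamma>2 t0\<bar> \<le> \<bar>\<gamma>2 t0\<bar> + \<delta> * C\<^sup>2" "\<bar>\<gamma>2 t0\<bar> \<le> G2m"
    using \<Gamma>'(7) G2m t0(2) by blast+
  then have "\<bar>\<Gamma>2 t0\<bar> \<le> G2m + \<delta> * C\<^sup>2" by linarith
  ultimately have M: "\<bar>\<Gamma>2 t0\<bar> + 2 * \<Gamma>1 t0 / t0 + 1 \<le> G2m + \<delta> * C\<^sup>2 + 2 * (G1m + \<delta> * C) / \<rho>0 + 1"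
    using mult_left_mono[of "\<Gamma>1 t0 / t0" "(G1m + \<delta> * C) / \<rho>0" 2] by simp
  have "0 < norm (y - x0)" using t0(1) by (simp add: t0_def)
  moreover have "norm (y - z) \<le> V" using V y(1) by blast
  ultimately show False
    using radial_touching_absurd[OF sub bdry op GN x0 z \<tau> \<Gamma>'(1-3) loc(2)[OF ymax] _ loc(1)[OF ymax]
        lm \<open>0 < \<delta> * C * exp (- C * r)\<close> \<Gamma>'(4)[rule_format, OF t0(1)[unfolded t0_def]] M[unfolded t0_def]
        _ \<tau>V \<Gamma>'(5)[rule_format, OF t0(1)[unfolded t0_def]] small]
    by blast
qed

lemma SUP_radial_difference_eq_SUP_Lambda_center:
  fixes \<Omega> A :: "'a::euclidean_space set" and \<gamma> \<gamma>1 \<gamma>2 :: "real \<Rightarrow> real"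
  assumes bd: "bounded \<Omega>" and op: "open \<Omega>"
    and bdry: "C1_boundary_normal \<Omega> \<nu>"
    and GD: "frontier \<Omega> - A \<noteq> {}"
    and GN: "frontier \<Omega> \<inter> A \<noteq> {} \<longrightarrow> convex \<Omega>"
    and sub: "visc_subsol \<Omega> A \<nu> \<beta> k u"
    and r: "r > 0"
    and g1: "\<forall>t\<in>{0..r}. (\<gamma> has_real_derivative \<gamma>1 t) (at t within {0..r})"
    and g2: "\<forall>t\<in>{0..r}. (\<gamma>1 has_real_derivative \<gamma>2 t) (at t within {0..r})"
    and g2c: "continuous_on {0..r} \<gamma>2"
    and ode: "\<forall>t\<in>{0<..<r}. - \<gamma>2 t - \<beta> * \<bar>\<gamma>1 t\<bar> = k"
    and gpos: "\<forall>t\<in>{0<..<r}. \<gamma>1 t > 0"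
    and x0: "x0 \<in> closure \<Omega>"
  defines "\<Lambda> \<equiv> (sphere x0 r \<inter> closure \<Omega>) \<union> (ball x0 r \<inter> (frontier \<Omega> - A))"
  shows "(SUP x\<in>cball x0 r \<inter> closure \<Omega>. u x - \<gamma> (norm (x - x0)))
       = (SUP x\<in>\<Lambda> \<union> {x0}. u x - \<gamma> (norm (x - x0)))"
proof -
  define K where "K = cball x0 r \<inter> closure \<Omega>"
  define f where "f x = u x - \<gamma> (norm (x - x0))" for x
  have uscf: "usc_on K f" unfolding K_def f_def
    by (rule usc_on_radial_difference[OF sub continuous_on_if_DERIV_within[OF g1]])
  have Kc: "compact K" unfolding K_def by (intro compact_Int_closed compact_cball closed_closure)
  have x0K: "x0 \<in> K" using x0 r by (simp add: K_def)
  have SK: "\<Lambda> \<union> {x0} \<subseteq> K" using x0K by (auto simp: \<Lambda>_def K_def frontier_def dist_norm)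
  have "\<Omega> \<noteq> {}" using GD by auto
  then obtain z where z: "z \<in> \<Omega>" by blast
  obtain V where V: "\<forall>x\<in>closure \<Omega>. norm (x - z) \<le> V" using bounded_closure_dist_bound[OF bd] by blast
  obtain G1m where G1m: "\<forall>t\<in>{0..r}. \<bar>\<gamma>1 t\<bar> \<le> G1m"
    using continuous_on_Icc_abs_bounded[OF continuous_on_if_DERIV_within[OF g2]] by blast
  obtain G2m where G2m: "\<forall>t\<in>{0..r}. \<bar>\<gamma>2 t\<bar> \<le> G2m"
    using continuous_on_Icc_abs_bounded[OF g2c] by blast
  define C where "C = \<bar>\<beta>\<bar> + 1"
  have "(SUP x\<in>K. f x) = (SUP x\<in>\<Lambda> \<union> {x0}. f x)"
  proof (rule SUP_eq_SUP_if_perturbed_maximizers_bounded[OF Kc uscf SK])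
    show "\<Lambda> \<union> {x0} \<noteq> {}" by simp
    fix m \<Delta> :: real assume m: "\<forall>x\<in>\<Lambda> \<union> {x0}. f x \<le> m" and \<Delta>: "\<Delta> > 0"
    then have "2 * \<Delta> > 0" by simp
    then obtain \<rho>0 where \<rho>0: "\<rho>0 > 0" "\<forall>x\<in>K. dist x x0 < \<rho>0 \<longrightarrow> f x < f x0 + 2 * \<Delta>"
      using uscf x0K unfolding usc_on_def by blast
    define \<delta> where "\<delta> = min 1 (\<Delta> / 2)"
    define g where "g = \<delta> * C * exp (- C * r)"
    define M where "M = G2m + \<delta> * C\<^sup>2 + 2 * (G1m + \<delta> * C) / \<rho>0 + 1"
    have \<delta>: "0 < \<delta>" "\<delta> \<le> \<Delta> / 2" using \<Delta> by (auto simp: \<delta>_def)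
    moreover have C0: "C > 0" by (simp add: C_def add_pos_nonneg)
    ultimately have g: "g > 0" by (simp add: g_def)
    obtain \<tau> where \<tau>: "\<tau> > 0" "\<tau> * V < g / 2" "\<tau> * V\<^sup>2 / 2 < \<Delta> / 2"
      "\<tau> + \<bar>\<beta>\<bar> * (\<tau> * V) + M * (2 * \<tau> * V / g)\<^sup>2 < g / 2"
      using exists_perturbation_weight[OF g \<Delta> g] by blast
    define \<Psi> where "\<Psi> x = \<delta> * (1 - exp (- C * norm (x - x0))) + \<tau> / 2 * (norm (x - z))\<^sup>2" for x
    show "\<exists>\<Psi>. continuous_on K \<Psi> \<and> (\<forall>x\<in>K. \<bar>\<Psi> x\<bar> \<le> \<Delta>) \<and>
           (\<forall>y\<in>K. (\<forall>x\<in>K. f x - \<Psi> x \<le> f y - \<Psi> y) \<longrightarrow> f y \<le> m + 2 * \<Delta>)"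
    proof (intro exI[of _ \<Psi>] conjI ballI impI)
      show "continuous_on K \<Psi>" unfolding \<Psi>_def by (intro continuous_intros)
    next
      fix y assume y: "y \<in> K"
      have "0 \<le> C * norm (y - x0)" using C0 by simp
      then have "exp (- C * norm (y - x0)) \<le> 1" by simp
      then have h1: "0 \<le> \<delta> * (1 - exp (- C * norm (y - x0)))" "\<delta> * (1 - exp (- C * norm (y - x0))) \<le> \<delta>"
        using \<delta> by (auto simp: mult_left_le)
      have "(norm (y - z))\<^sup>2 \<le> V\<^sup>2" using V y by (auto simp: K_def intro!: power_mono)
      then have h2: "\<tau> * (norm (y - z))\<^sup>2 \<le> \<tau> * V\<^sup>2" using \<tau>(1) by simp
      have "0 \<le> \<tau> * (norm (y - z))\<^sup>2" using \<tau>(1) by simp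
      then show "\<bar>\<Psi> y\<bar> \<le> \<Delta>" using h1 h2 \<tau>(3) \<delta> unfolding \<Psi>_def abs_le_iff by linarith
    next
      fix y assume y: "y \<in> K" and ymax: "\<forall>x\<in>K. f x - \<Psi> x \<le> f y - \<Psi> y"
      show "f y \<le> m + 2 * \<Delta>"
      proof (rule ccontr)
        assume big: "\<not> f y \<le> m + 2 * \<Delta>"
        have "y \<notin> \<Lambda>"
        proof
          assume "y \<in> \<Lambda>"
          then have "f y \<le> m" using m by blast
          with big \<Delta> show False by linarith
        qed
        have "\<not> dist y x0 < \<rho>0"
        proof
          assume "dist y x0 < \<rho>0"
          then have "f y < f x0 + 2 * \<Delta>" using \<rho>0(2) y by blast
          moreover have "f x0 \<le> m" using m by blast
          ultimately show False using big by linarith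
        qed
        then have "\<rho>0 \<le> norm (y - x0)" by (simp add: dist_norm)
        have "\<forall>x\<in>cball x0 r \<inter> closure \<Omega>.
          u x - (\<gamma> (norm (x - x0)) + \<delta> * (1 - exp (- C * norm (x - x0))) + \<tau> / 2 * (norm (x - z))\<^sup>2)
          \<le> u y - (\<gamma> (norm (y - x0)) + \<delta> * (1 - exp (- C * norm (y - x0))) + \<tau> / 2 * (norm (y - z))\<^sup>2)"
          using ymax by (simp add: K_def f_def \<Psi>_def diff_diff_eq add.assoc)
        from raised_profile_no_interior_maximizer[OF sub bdry op GN g1 g2 g2c ode gpos x0 z \<tau>(1) \<delta>(1)
            C_def V G1m G2m y[unfolded K_def] \<open>y \<notin> \<Lambda>\<close>[unfolded \<Lambda>_def] \<rho>0(1) \<open>\<rho>0 \<le> _\<close> this]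
        show False using \<tau>(2,4) unfolding g_def M_def by linarith
      qed
    qed
  qed
  then show ?thesis by (simp add: K_def f_def)
qed

lemma scaled_profile_no_interior_maximizer:
  fixes \<Omega> A :: "'a::euclidean_space set" and \<gamma> \<gamma>1 \<gamma>2 :: "real \<Rightarrow> real"
  assumes sub: "visc_subsol \<Omega> A \<nu> \<beta> k u"
    and bdry: "C1_boundary_normal \<Omega> \<nu>" and op: "open \<Omega>"
    and GN: "frontier \<Omega> \<inter> A \<noteq> {} \<longrightarrow> convex \<Omega>"
    and r: "r > 0"
    and g1: "\<forall>t\<in>{0..r}. (\<gamma> has_real_derivative \<gamma>1 t) (at t within {0..r})"
    and g2: "\<forall>t\<in>{0..r}. (\<gamma>1 has_real_derivative \<gamma>2 t) (at t within {0..r})"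
    and g2c: "continuous_on {0..r} \<gamma>2"
    and ode: "\<forall>t\<in>{0<..<r}. - \<gamma>2 t - \<beta> * \<bar>\<gamma>1 t\<bar> = k"
    and gpos: "\<forall>t\<in>{0<..<r}. \<gamma>1 t > 0" and g10: "\<gamma>1 0 = 0" and g20: "\<gamma>2 0 = - k"
    and x0: "x0 \<in> closure \<Omega>" and z: "z \<in> \<Omega>" and \<tau>: "\<tau> > 0" and \<delta>: "0 < \<delta>" "\<delta> < 1"
    and V: "\<forall>x\<in>closure \<Omega>. norm (x - z) \<le> V"
    and G1m: "\<forall>t\<in>{0..r}. \<bar>\<gamma>1 t\<bar> \<le> G1m" and G2m: "\<forall>t\<in>{0..r}. \<bar>\<gamma>2 t\<bar> \<le> G2m"
    and cg: "\<forall>t\<in>{0..r}. cg * t \<le> \<gamma>1 t" "cg > 0"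
    and t1: "0 < t1" "t1 \<le> r" and near: "\<forall>t\<in>{0..t1}. \<gamma>1 t \<le> L * t"
    and y: "y \<in> cball x0 r \<inter> closure \<Omega>"
      "y \<notin> (sphere x0 r \<inter> closure \<Omega>) \<union> (ball x0 r \<inter> (frontier \<Omega> - A))"
    and ymax: "\<forall>x\<in>cball x0 r \<inter> closure \<Omega>.
      u x - ((1 - \<delta>) * \<gamma> (norm (x - x0)) + \<tau> / 2 * (norm (x - z))\<^sup>2)
      \<le> u y - ((1 - \<delta>) * \<gamma> (norm (y - x0)) + \<tau> / 2 * (norm (y - z))\<^sup>2)"
    and slope: "(1 - \<delta>) * L + \<bar>\<beta>\<bar> * (L * t1 + \<tau> * V) + \<tau> < - k"
    and small: "\<tau> + \<bar>\<beta>\<bar> * (\<tau> * V) < - \<delta> * k"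
    and \<tau>V: "\<tau> * V \<le> (1 - \<delta>) * cg * t1 / 2"
    and small_far: "\<tau> + \<bar>\<beta>\<bar> * (\<tau> * V) + (G2m + 2 * G1m / t1 + 1)
       * (2 * \<tau> * V / ((1 - \<delta>) * cg * t1))\<^sup>2 < - \<delta> * k / 2"
  shows False
proof -
  define \<Gamma> where "\<Gamma> t = (1 - \<delta>) * \<gamma> t" for t
  define \<Gamma>1 where "\<Gamma>1 t = (1 - \<delta>) * \<gamma>1 t" for t
  define \<Gamma>2 where "\<Gamma>2 t = (1 - \<delta>) * \<gamma>2 t" for t
  have d\<Gamma>: "\<forall>t\<in>{0..r}. (\<Gamma> has_real_derivative \<Gamma>1 t) (at t within {0..r})"
    using g1 unfolding \<Gamma>_def \<Gamma>1_def by (auto intro!: derivative_eq_intros)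
  have d\<Gamma>1: "\<forall>t\<in>{0..r}. (\<Gamma>1 has_real_derivative \<Gamma>2 t) (at t within {0..r})"
    using g2 unfolding \<Gamma>1_def \<Gamma>2_def by (auto intro!: derivative_eq_intros)
  have c\<Gamma>2: "continuous_on {0..r} \<Gamma>2" unfolding \<Gamma>2_def by (intro continuous_intros g2c)
  have margin: "k + - \<delta> * k \<le> - \<Gamma>2 t - \<beta> * \<Gamma>1 t" if "t \<in> {0<..<r}" for t
  proof -
    have "- \<gamma>2 t - \<beta> * \<gamma>1 t = k" using ode gpos that by force
    moreover have "- \<Gamma>2 t - \<beta> * \<Gamma>1 t = (1 - \<delta>) * (- \<gamma>2 t - \<beta> * \<gamma>1 t)"
      by (simp add: \<Gamma>1_def \<Gamma>2_def algebra_simps)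
    ultimately show ?thesis by (simp add: algebra_simps)
  qed
  note loc = maximizer_off_Lambda[OF op y(1) ymax y(2)]
  have lm: "\<exists>e>0. \<forall>x\<in>closure \<Omega> \<inter> ball y e. u x - (\<Gamma> (norm (x - x0)) + \<tau> / 2 * (norm (x - z))\<^sup>2)
      \<le> u y - (\<Gamma> (norm (y - x0)) + \<tau> / 2 * (norm (y - z))\<^sup>2)"
    using loc(3) by (simp add: \<Gamma>_def)
  have Vy: "norm (y - z) \<le> V" using V y(1) by blast
  define t0 where "t0 = norm (y - x0)"
  have t0: "t0 < r" "0 \<le> t0" using loc(1) by (auto simp: t0_def)
  consider "y = x0" | "y \<noteq> x0" "t0 \<le> t1" | "t1 < t0" using not_le by blast
  then show False
  proof cases
    case 1
    have "\<Gamma>1 0 = 0" by (simp add: \<Gamma>1_def g10)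
    moreover have "k + - \<delta> * k \<le> - \<Gamma>2 0" by (simp add: \<Gamma>2_def g20 algebra_simps)
    ultimately show False
      using radial_touching_absurd_at_center[OF sub bdry op GN z \<tau> r d\<Gamma> d\<Gamma>1 c\<Gamma>2 _ loc(2)[unfolded 1]
          lm[unfolded 1] Vy[unfolded 1] _ small]
      by blast
  next
    case 2
    have t0': "t0 \<in> {0<..<r}" using 2 t0 by (auto simp: t0_def)
    have "\<gamma>1 t0 \<le> L * t0" "0 < \<gamma>1 t0" using near gpos t0 t0' 2 by auto
    then have "0 < L * t0" by linarith
    then have L: "0 \<le> L" using t0' by (auto simp: zero_less_mult_iff)
    have "L * t0 \<le> L * t1" using L 2 by (simp add: mult_left_mono)
    moreover have "(1 - \<delta>) * L * t0 \<le> L * t0"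
      using \<delta> L t0' mult_left_le_one_le[of "L * t0" "1 - \<delta>"] by (simp add: mult.assoc)
    ultimately have "(1 - \<delta>) * L * t0 \<le> L * t1" by linarith
    then have "\<bar>\<beta>\<bar> * ((1 - \<delta>) * L * t0 + \<tau> * V) \<le> \<bar>\<beta>\<bar> * (L * t1 + \<tau> * V)"
      by (intro mult_left_mono) auto
    with slope have slope': "(1 - \<delta>) * L + \<bar>\<beta>\<bar> * ((1 - \<delta>) * L * t0 + \<tau> * V) + \<tau> < - k"
      by linarith
    have "(1 - \<delta>) * \<gamma>1 t0 \<le> (1 - \<delta>) * (L * t0)" "0 \<le> (1 - \<delta>) * \<gamma>1 t0"
      using \<open>\<gamma>1 t0 \<le> L * t0\<close> \<open>0 < \<gamma>1 t0\<close> \<delta> by (simp_all add: mult_left_mono)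
    then have G1: "\<Gamma>1 t0 \<le> (1 - \<delta>) * L * t0" "0 \<le> \<Gamma>1 t0" by (simp_all add: \<Gamma>1_def mult.assoc)
    show False
      by (rule radial_touching_absurd_near_center[where L = "(1 - \<delta>) * L",
            OF sub bdry op GN x0 z \<tau> d\<Gamma> d\<Gamma>1 c\<Gamma>2 loc(2) _ loc(1) lm _ _ Vy _
            margin[OF t0'[unfolded t0_def]] small])
         (use 2 G1 slope' in \<open>auto simp: t0_def\<close>)
  next
    case 3
    have t0': "t0 \<in> {0<..<r}" "t0 \<in> {0..r}" using 3 t0 t1 by auto
    have "cg * t1 \<le> cg * t0" using cg 3 by (simp add: mult_left_mono)
    moreover have "cg * t0 \<le> \<gamma>1 t0" using cg t0' by blast
    ultimately have "cg * t1 \<le> \<gamma>1 t0" by linarith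
    then have g: "(1 - \<delta>) * cg * t1 \<le> \<Gamma>1 t0"
      using \<delta> mult_left_mono[of "cg * t1" "\<gamma>1 t0" "1 - \<delta>"] by (simp add: \<Gamma>1_def mult.assoc)
    have bd: "\<bar>\<gamma>1 t0\<bar> \<le> G1m" "\<bar>\<gamma>2 t0\<bar> \<le> G2m" using G1m G2m t0'(2) by blast+
    have "0 < \<gamma>1 t0" using gpos t0'(1) by blast
    then have "0 \<le> \<delta> * \<gamma>1 t0" using \<delta> by simp
    moreover have "\<Gamma>1 t0 = \<gamma>1 t0 - \<delta> * \<gamma>1 t0" by (simp add: \<Gamma>1_def algebra_simps)
    ultimately have "\<Gamma>1 t0 \<le> G1m" using bd(1) abs_ge_self[of "\<gamma>1 t0"] by linarith
    moreover have "0 \<le> G1m" using bd(1) abs_ge_zero[of "\<gamma>1 t0"] by linarith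
    ultimately have "\<Gamma>1 t0 / t0 \<le> G1m / t1" using t1 3 by (intro frac_le) auto
    then have "2 * (\<Gamma>1 t0 / t0) \<le> 2 * (G1m / t1)" by (rule mult_left_mono) simp
    then have "2 * \<Gamma>1 t0 / t0 \<le> 2 * G1m / t1" by simp
    moreover have "\<bar>\<Gamma>2 t0\<bar> = (1 - \<delta>) * \<bar>\<gamma>2 t0\<bar>" using \<delta> by (simp add: \<Gamma>2_def abs_mult)
    moreover have "(1 - \<delta>) * \<bar>\<gamma>2 t0\<bar> \<le> \<bar>\<gamma>2 t0\<bar>" using \<delta> by (intro mult_left_le_one_le) auto
    ultimately have M: "\<bar>\<Gamma>2 t0\<bar> + 2 * \<Gamma>1 t0 / t0 + 1 \<le> G2m + 2 * G1m / t1 + 1" using bd(2) by linarith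
    have "0 < norm (y - x0)" "0 < (1 - \<delta>) * cg * t1" using t0' \<delta> cg t1 by (auto simp: t0_def)
    then show False
      using radial_touching_absurd[OF sub bdry op GN x0 z \<tau> d\<Gamma> d\<Gamma>1 c\<Gamma>2 loc(2) _ loc(1) lm
          _ g[unfolded t0_def] M[unfolded t0_def] Vy \<tau>V margin[OF t0'(1)[unfolded t0_def]] small_far]
      by blast
  qed
qed

lemma SUP_radial_difference_eq_SUP_Lambda:
  fixes \<Omega> A :: "'a::euclidean_space set" and \<gamma> \<gamma>1 \<gamma>2 :: "real \<Rightarrow> real"
  assumes bd: "bounded \<Omega>" and op: "open \<Omega>" and conn: "connected \<Omega>"
    and bdry: "C1_boundary_normal \<Omega> \<nu>"
    and GD: "frontier \<Omega> - A \<noteq> {}"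
    and GN: "frontier \<Omega> \<inter> A \<noteq> {} \<longrightarrow> convex \<Omega>"
    and sub: "visc_subsol \<Omega> A \<nu> \<beta> k u"
    and r: "r > 0"
    and g1: "\<forall>t\<in>{0..r}. (\<gamma> has_real_derivative \<gamma>1 t) (at t within {0..r})"
    and g2: "\<forall>t\<in>{0..r}. (\<gamma>1 has_real_derivative \<gamma>2 t) (at t within {0..r})"
    and g2c: "continuous_on {0..r} \<gamma>2"
    and ode: "\<forall>t\<in>{0<..<r}. - \<gamma>2 t - \<beta> * \<bar>\<gamma>1 t\<bar> = k"
    and gpos: "\<forall>t\<in>{0<..<r}. \<gamma>1 t > 0" and g10: "\<gamma>1 0 = 0"
    and x0: "x0 \<in> closure \<Omega>"
  defines "\<Lambda> \<equiv> (sphere x0 r \<inter> closure \<Omega>) \<union> (ball x0 r \<inter> (frontier \<Omega> - A))"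
  shows "(SUP x\<in>cball x0 r \<inter> closure \<Omega>. u x - \<gamma> (norm (x - x0))) = (SUP x\<in>\<Lambda>. u x - \<gamma> (norm (x - x0)))"
proof -
  define K where "K = cball x0 r \<inter> closure \<Omega>"
  define f where "f x = u x - \<gamma> (norm (x - x0))" for x
  have c\<gamma>: "continuous_on {0..r} \<gamma>" by (rule continuous_on_if_DERIV_within[OF g1])
  have uscf: "usc_on K f" unfolding K_def f_def by (rule usc_on_radial_difference[OF sub c\<gamma>])
  have Kc: "compact K" unfolding K_def by (intro compact_Int_closed compact_cball closed_closure)
  have SK: "\<Lambda> \<subseteq> K" by (auto simp: \<Lambda>_def K_def frontier_def dist_norm)
  have "\<Omega> \<noteq> {}" using GD by auto
  then obtain z where z: "z \<in> \<Omega>" by blast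
  obtain V where V: "\<forall>x\<in>closure \<Omega>. norm (x - z) \<le> V" using bounded_closure_dist_bound[OF bd] by blast
  obtain G0m where G0m: "G0m > 0" "\<forall>t\<in>{0..r}. \<bar>\<gamma> t\<bar> \<le> G0m"
    using continuous_on_Icc_abs_bounded[OF c\<gamma>] by blast
  obtain G1m where G1m: "\<forall>t\<in>{0..r}. \<bar>\<gamma>1 t\<bar> \<le> G1m"
    using continuous_on_Icc_abs_bounded[OF continuous_on_if_DERIV_within[OF g2]] by blast
  obtain G2m where G2m: "\<forall>t\<in>{0..r}. \<bar>\<gamma>2 t\<bar> \<le> G2m"
    using continuous_on_Icc_abs_bounded[OF g2c] by blast
  have k: "k < 0" by (rule ode_rhs_neg[OF r g2 ode gpos g10])
  have g20: "\<gamma>2 0 = - k" by (rule ode_at_zero[OF r g2 g2c ode g10])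
  obtain cg where cg: "cg > 0" "\<forall>t\<in>{0..r}. cg * t \<le> \<gamma>1 t"
    using ode_slope_linear_lower_bound[OF r g2 ode gpos g10] by blast
  have "(SUP x\<in>K. f x) = (SUP x\<in>\<Lambda>. f x)"
  proof (rule SUP_eq_SUP_if_perturbed_maximizers_bounded[OF Kc uscf SK])
    show "\<Lambda> \<noteq> {}" unfolding \<Lambda>_def by (rule Lambda_nonempty[OF conn GD x0 r])
    fix m \<Delta> :: real assume m: "\<forall>x\<in>\<Lambda>. f x \<le> m" and \<Delta>: "\<Delta> > 0"
    define \<delta> where "\<delta> = min (1 / 2) (\<Delta> / (2 * G0m))"
    define \<mu> where "\<mu> = - \<delta> * k"
    define L where "L = - k + \<mu> / 4"
    have \<delta>: "0 < \<delta>" "\<delta> < 1" using \<Delta> G0m by (auto simp: \<delta>_def)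
    have "\<delta> * G0m \<le> \<Delta> / (2 * G0m) * G0m" using G0m by (intro mult_right_mono) (auto simp: \<delta>_def)
    then have \<delta>G: "\<delta> * G0m \<le> \<Delta> / 2" using G0m by simp
    have \<mu>: "\<mu> > 0" using k \<delta> by (simp add: \<mu>_def mult_pos_neg)
    obtain b where b: "b > 0" "b \<le> r" "\<forall>t\<in>{0..b}. \<gamma>1 t \<le> L * t"
      using slope_linear_upper_bound_near_zero[OF r g2 g2c g10, of L] \<mu> g20 by (auto simp: L_def)
    have lim1: "((\<lambda>t. t) \<longlongrightarrow> 0) (at_right (0::real))"
      "((\<lambda>t. \<bar>\<beta>\<bar> * (L * t)) \<longlongrightarrow> 0) (at_right (0::real))"
      by (auto intro!: tendsto_eq_intros)
    have "\<forall>\<^sub>F t in at_right 0. t < b \<and> \<bar>\<beta>\<bar> * (L * t) < \<mu> / 4"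
      using b \<mu> by (intro eventually_conj order_tendstoD(2)[OF lim1(1)] order_tendstoD(2)[OF lim1(2)]) auto
    then obtain t1 where t1: "t1 > 0" "t1 < b" "\<bar>\<beta>\<bar> * (L * t1) < \<mu> / 4"
      using exists_pos_if_eventually_at_right by blast
    define g where "g = (1 - \<delta>) * cg * t1"
    define M where "M = G2m + 2 * G1m / t1 + 1"
    have g: "g > 0" using \<delta> cg t1 by (simp add: g_def)
    obtain \<tau> where \<tau>: "\<tau> > 0" "\<tau> * V < g / 2" "\<tau> * V\<^sup>2 / 2 < \<Delta> / 2"
      "\<tau> + \<bar>\<beta>\<bar> * (\<tau> * V) < \<mu> / 4" "\<tau> + \<bar>\<beta>\<bar> * (\<tau> * V) + M * (2 * \<tau> * V / g)\<^sup>2 < \<mu> / 2"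
      using exists_perturbation_weight[OF g \<Delta> \<mu>] by blast
    define \<Psi> where "\<Psi> x = - \<delta> * \<gamma> (norm (x - x0)) + \<tau> / 2 * (norm (x - z))\<^sup>2" for x
    show "\<exists>\<Psi>. continuous_on K \<Psi> \<and> (\<forall>x\<in>K. \<bar>\<Psi> x\<bar> \<le> \<Delta>) \<and>
           (\<forall>y\<in>K. (\<forall>x\<in>K. f x - \<Psi> x \<le> f y - \<Psi> y) \<longrightarrow> f y \<le> m + 2 * \<Delta>)"
    proof (intro exI[of _ \<Psi>] conjI ballI impI)
      show "continuous_on K \<Psi>"
        unfolding \<Psi>_def K_def
        by (intro continuous_intros continuous_on_compose2[OF c\<gamma>])
           (auto simp: dist_norm norm_minus_commute)
    next
      fix y assume y: "y \<in> K"
      have "norm (y - x0) \<in> {0..r}" using y by (auto simp: K_def dist_norm norm_minus_commute)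
      then have "\<bar>\<gamma> (norm (y - x0))\<bar> \<le> G0m" using G0m(2) by blast
      then have h1: "\<bar>\<delta> * \<gamma> (norm (y - x0))\<bar> \<le> \<delta> * G0m" using \<delta> by (simp add: abs_mult mult_left_mono)
      have "(norm (y - z))\<^sup>2 \<le> V\<^sup>2" using V y by (auto simp: K_def intro!: power_mono)
      then have h2: "\<tau> * (norm (y - z))\<^sup>2 \<le> \<tau> * V\<^sup>2" using \<tau>(1) by simp
      have "0 \<le> \<tau> * (norm (y - z))\<^sup>2" using \<tau>(1) by simp
      then show "\<bar>\<Psi> y\<bar> \<le> \<Delta>" using h1 h2 \<tau>(3) \<delta>G unfolding \<Psi>_def abs_le_iff by linarith
    next
      fix y assume y: "y \<in> K" and ymax: "\<forall>x\<in>K. f x - \<Psi> x \<le> f y - \<Psi> y"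
      show "f y \<le> m + 2 * \<Delta>"
      proof (rule ccontr)
        assume big: "\<not> f y \<le> m + 2 * \<Delta>"
        have "y \<notin> \<Lambda>"
        proof
          assume "y \<in> \<Lambda>"
          then have "f y \<le> m" using m by blast
          with big \<Delta> show False by linarith
        qed
        have ymax': "\<forall>x\<in>cball x0 r \<inter> closure \<Omega>.
          u x - ((1 - \<delta>) * \<gamma> (norm (x - x0)) + \<tau> / 2 * (norm (x - z))\<^sup>2)
          \<le> u y - ((1 - \<delta>) * \<gamma> (norm (y - x0)) + \<tau> / 2 * (norm (y - z))\<^sup>2)"
          using ymax by (simp add: K_def f_def \<Psi>_def algebra_simps)
        have "0 \<le> \<delta> * \<mu>" using \<delta> \<mu> by simp
        moreover have "(1 - \<delta>) * L = - k - \<mu> + \<mu> / 4 - \<delta> * \<mu> / 4"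
          by (simp add: L_def \<mu>_def field_simps)
        ultimately have slope: "(1 - \<delta>) * L + \<bar>\<beta>\<bar> * (L * t1 + \<tau> * V) + \<tau> < - k"
          using t1(3) \<tau>(4) \<mu> unfolding distrib_left by linarith
        have near: "\<forall>t\<in>{0..t1}. \<gamma>1 t \<le> L * t" using b t1 by auto
        have "t1 \<le> r" using b t1 by linarith
        moreover have "\<tau> + \<bar>\<beta>\<bar> * (\<tau> * V) < - \<delta> * k" using \<tau>(4) \<mu> unfolding \<mu>_def by linarith
        moreover have "\<tau> * V \<le> (1 - \<delta>) * cg * t1 / 2" using \<tau>(2) unfolding g_def by linarith
        moreover have "\<tau> + \<bar>\<beta>\<bar> * (\<tau> * V) + (G2m + 2 * G1m / t1 + 1)
            * (2 * \<tau> * V / ((1 - \<delta>) * cg * t1))\<^sup>2 < - \<delta> * k / 2"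
          using \<tau>(5) unfolding g_def M_def \<mu>_def .
        ultimately show False
          using scaled_profile_no_interior_maximizer[OF sub bdry op GN r g1 g2 g2c ode gpos g10 g20 x0 z
              \<tau>(1) \<delta>(1,2) V G1m G2m cg(2,1) t1(1) _ near y[unfolded K_def] \<open>y \<notin> \<Lambda>\<close>[unfolded \<Lambda>_def]
              ymax' slope] by blast
      qed
    qed
  qed
  then show ?thesis by (simp add: K_def f_def)
qed

theorem lemma3p1:
  fixes \<Omega> A :: "'a::euclidean_space set" and \<nu> :: "'a \<Rightarrow> 'a"
    and \<beta> k r :: real and u :: "'a \<Rightarrow> real" and x0 :: 'a
    and \<gamma> \<gamma>1 \<gamma>2 :: "real \<Rightarrow> real"
  assumes \<Omega>: "bounded \<Omega>" "open \<Omega>" "connected \<Omega>"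
    and bdry: "C1_boundary_normal \<Omega> \<nu>"
    and A: "open A"
    and GD: "frontier \<Omega> - A \<noteq> {}"
    and GN: "frontier \<Omega> \<inter> A \<noteq> {} \<longrightarrow> convex \<Omega>"
    and sub: "visc_subsol \<Omega> A \<nu> \<beta> k u"
    and r: "r > 0"
    and g1: "\<forall>t\<in>{0..r}. (\<gamma> has_real_derivative \<gamma>1 t) (at t within {0..r})"
    and g2: "\<forall>t\<in>{0..r}. (\<gamma>1 has_real_derivative \<gamma>2 t) (at t within {0..r})"
    and g2c: "continuous_on {0..r} \<gamma>2"
    and ode: "\<forall>t\<in>{0<..<r}. - \<gamma>2 t - \<beta> * \<bar>\<gamma>1 t\<bar> = k"
    and gpos: "\<forall>t\<in>{0<..<r}. \<gamma>1 t > 0"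
    and x0: "x0 \<in> closure \<Omega>"
  defines "\<phi> \<equiv> (\<lambda>x. \<gamma> (norm (x - x0)))"
    and "\<Lambda> \<equiv> (sphere x0 r \<inter> closure \<Omega>) \<union> (ball x0 r \<inter> (frontier \<Omega> - A))"
  shows "(SUP x\<in>cball x0 r \<inter> closure \<Omega>. u x - \<phi> x) = (SUP x\<in>\<Lambda> \<union> {x0}. u x - \<phi> x)
       \<and> (\<gamma>1 0 = 0 \<longrightarrow>
         (SUP x\<in>cball x0 r \<inter> closure \<Omega>. u x - \<phi> x) = (SUP x\<in>\<Lambda>. u x - \<phi> x))"
proof -
  have "(SUP x\<in>cball x0 r \<inter> closure \<Omega>. u x - \<phi> x) = (SUP x\<in>\<Lambda> \<union> {x0}. u x - \<phi> x)"
    unfolding \<phi>_def \<Lambda>_def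
    by (rule SUP_radial_difference_eq_SUP_Lambda_center[OF \<Omega>(1,2) bdry GD GN sub r g1 g2 g2c ode gpos x0])
  moreover have "(SUP x\<in>cball x0 r \<inter> closure \<Omega>. u x - \<phi> x) = (SUP x\<in>\<Lambda>. u x - \<phi> x)"
    if "\<gamma>1 0 = 0"
    unfolding \<phi>_def \<Lambda>_def
    by (rule SUP_radial_difference_eq_SUP_Lambda[OF \<Omega> bdry GD GN sub r g1 g2 g2c ode gpos that x0])
  ultimately show ?thesis by blast
qed

end
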